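(* Let $n \ge 1$ and $m \ge 1$ be integers, let $\lambda > 1$ be a real number, and let the coefficients $a_\alpha$, $a$, $b$ be as in the context. Suppose that for some real number $\sigma > 1$, $$\int_1^\infty r^{(m - n)\lambda + n - 1} q(r)\, dr = \infty, \qquad \text{where } q(r) = \mathop{\rm ess\,inf}_{B_{\sigma r} \setminus B_{r/\sigma}} a^{-\lambda} b .$$ Then every solution $u$ of the inequality $$\sum_{|\alpha| = m} (-1)^m \partial^\alpha a_\alpha(x, u) \ge b(x) |u|^\lambda \quad \text{in } \mathbb{R}^n$$ is trivial, i.e. $u(x) = 0$ for almost all $x \in \mathbb{R}^n$.
   Context: For each multi-index $\alpha = (\alpha_1,\dots,\alpha_n)$ with $|\alpha| = \alpha_1 + \dots + \alpha_n = m$, $a_\alpha : \mathbb{R}^n \times \mathbb{R} \to \mathbb{R}$ is a given function, and $\partial^\alpha = \partial^{|\alpha|}/\partial x_1^{\alpha_1}\cdots\partial x_n^{\alpha_n}$. The function $b : \mathbb{R}^n \to (0,\infty)$ is measurable and positive, and there is a positive measurable function $a : \mathbb{R}^n \to (0,\infty)$ such that $|a_\alpha(x,\zeta)| \le a(x)|\zeta|$ for almost all $x \in \mathbb{R}^n$, all $\zeta \in \mathbb{R}$ and all $|\alpha| = m$. $B_r$ denotes the open ball in $\mathbb{R}^n$ of radius $r>0$ centered at the origin. A function $u$ is called a solution of the inequality if $b(x)|u|^\lambda \in L_{1,loc}(\mathbb{R}^n)$, $a_\alpha(x,u) \in L_{1,loc}(\mathbb{R}^n)$ for all $|\alpha|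 = m$, and $$\int_{\mathbb{R}^n} \sum_{|\alpha|=m} a_\alpha(x,u)\, \partial^\alpha \varphi \, dx \ge \int_{\mathbb{R}^n} b(x)|u|^\lambda \varphi\, dx$$ for every non-negative $\varphi \in C_0^\infty(\mathbb{R}^n)$. *)

theory Defs
  imports "HOL-Analysis.Analysis" "HOL-Library.Multiset"
begin

text \<open>Points of R^n are vectors real^'n with a finite index type 'n (n = CARD('n)).
  A multi-index alpha = (alpha_1,...,alpha_n) is a multiset over the coordinate indices:
  alpha_i = count alpha i and |alpha| = size alpha.\<close>

definition partial_der :: "'n::finite \<Rightarrow> (real^'n \<Rightarrow> real) \<Rightarrow> real^'n \<Rightarrow> real" where
  "partial_der i f x = deriv (\<lambda>t. f (x + t *\<^sub>R axis i 1)) 0"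

fun Dlist :: "'n::finite list \<Rightarrow> (real^'n \<Rightarrow> real) \<Rightarrow> real^'n \<Rightarrow> real" where
  "Dlist [] f = f"
| "Dlist (i # is) f = partial_der i (Dlist is f)"

text \<open>The partial derivative of multi-index alpha (order irrelevant for smooth functions).\<close>
definition Dalpha :: "'n::finite multiset \<Rightarrow> (real^'n \<Rightarrow> real) \<Rightarrow> real^'n \<Rightarrow> real" where
  "Dalpha \<alpha> f = Dlist (SOME is. mset is = \<alpha>) f"

definition smooth_fun :: "(real^'n::finite \<Rightarrow> real) \<Rightarrow> bool" where
  "smooth_fun f \<longleftrightarrow> (\<forall>is. continuous_on UNIV (Dlist is f) \<and>
       (\<forall>i x. (\<lambda>t. Dlist is f (x + t *\<^sub>R axis i 1)) differentiable (at 0)))"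

definition test_fun :: "(real^'n::finite \<Rightarrow> real) \<Rightarrow> bool" where
  "test_fun f \<longleftrightarrow> smooth_fun f \<and> compact (closure {x. f x \<noteq> 0})"

definition loc_integrable :: "(real^'n::finite \<Rightarrow> real) \<Rightarrow> bool" where
  "loc_integrable f \<longleftrightarrow> (\<forall>K. compact K \<longrightarrow> set_integrable lebesgue K f)"

text \<open>u is a (weak) solution of sum_{|alpha|=m} (-1)^m D^alpha a_alpha(x,u) >= b(x)|u|^lambda.\<close>
definition is_solution :: "nat \<Rightarrow> real \<Rightarrow> ('n::finite multiset \<Rightarrow> real^'n \<Rightarrow> real \<Rightarrow> real)
    \<Rightarrow> (real^'n \<Rightarrow> real) \<Rightarrow> (real^'n \<Rightarrow> real) \<Rightarrow> bool" where
  "is_solution m lam A b u \<longleftrightarrow>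
     loc_integrable (\<lambda>x. b x * \<bar>u x\<bar> powr lam) \<and>
     (\<forall>\<alpha>. size \<alpha> = m \<longrightarrow> loc_integrable (\<lambda>x. A \<alpha> x (u x))) \<and>
     (\<forall>\<phi>. test_fun \<phi> \<and> (\<forall>x. 0 \<le> \<phi> x) \<longrightarrow>
        (\<integral>x. (\<Sum>\<alpha>\<in>{\<alpha>. size \<alpha> = m}. A \<alpha> x (u x) * Dalpha \<alpha> \<phi> x) \<partial>lebesgue)
          \<ge> (\<integral>x. b x * \<bar>u x\<bar> powr lam * \<phi> x \<partial>lebesgue))"

definition essinf_on :: "(real^'n::finite) set \<Rightarrow> (real^'n \<Rightarrow> real) \<Rightarrow> ennreal" where
  "essinf_on S f = Sup {c. AE x in lebesgue. x \<in> S \<longrightarrow> c \<le> ennreal (f x)}"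

end

theory Submission
  imports Defs
begin

text \<open>Test the inequality with \<open>\<Phi>(x/r)\<close>, where \<open>\<Phi>\<close> is a cutoff that equals 1 on the unit ball and
  whose derivatives of order \<open>m\<close> are bounded by \<open>\<Phi> powr (1/lam)\<close>. Young's inequality then bounds
  the derivative terms by a small multiple of the mass of \<open>b |u|^lam \<Phi>(x/r)\<close> on the shell plus a
  constant. For the mass \<open>F(r)\<close> of \<open>b |u|^lam\<close> in the ball of radius \<open>r\<close>, an essential lower bound
  \<open>c\<close> of \<open>a^(-lam) b\<close> on the shell around radius \<open>r\<close>, and \<open>gam = (m - n) lam + n\<close>, this yields,
  up to constants, \<open>F(r) \<le> (c r^gam)^(-1/(lam-1))\<close> and \<open>F(r)^lam c r^gam \<le> F(\<sigma> r) - F(r)\<close>.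
  Together they give \<open>c r^gam \<le> F(r)^(1-lam) - F(\<sigma> r)^(1-lam)\<close> as soon as \<open>F(r) > 0\<close>. Along the
  radii \<open>\<sigma>^k\<close> the right-hand side telescopes, so the integral of \<open>r^(gam-1) q(r)\<close> over
  \<open>[1, \<infinity>)\<close> would be finite; hence \<open>F\<close> vanishes.\<close>

section \<open>A smooth cutoff function\<close>

lemma power_div_fact_le_exp:
  fixes x :: real
  assumes "x \<ge> 0"
  shows "x ^ n / fact n \<le> exp x"
proof -
  have s: "(\<lambda>i. x^i /\<^sub>R fact i) sums exp x" by (rule exp_converges)
  have "x ^ n / fact n \<le> (\<Sum>i<Suc n. x^i /\<^sub>R fact i)"
    using assms by (simp add: divide_inverse sum_nonneg)
  also have "\<dots> \<le> suminf (\<lambda>i. x^i /\<^sub>R fact i)"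
    by (rule sum_le_suminf) (use s assms in \<open>auto simp: sums_iff\<close>)
  finally show ?thesis using s by (simp add: sums_iff)
qed

definition flat_exp :: "nat \<Rightarrow> real \<Rightarrow> real" where
  "flat_exp k t = (if t > 0 then exp (- 1 / t) / t ^ k else 0)"

lemma flat_exp_nonneg: "flat_exp k t \<ge> 0"
  by (simp add: flat_exp_def)

lemma flat_exp_le: "flat_exp k t \<le> fact (Suc k) * \<bar>t\<bar>"
proof (cases "t > 0")
  case True
  have "(1/t) ^ Suc k / fact (Suc k) \<le> exp (1/t)"
    using True by (intro power_div_fact_le_exp) auto
  moreover have fpos: "fact (Suc k) > (0::real)" by simp
  ultimately have "(1/t) ^ Suc k \<le> exp (1/t) * fact (Suc k)"
    by (simp only: pos_divide_le_eq[OF fpos])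
  hence "(1/t) ^ Suc k * t ^ Suc k \<le> exp (1/t) * fact (Suc k) * t ^ Suc k"
    using True by (intro mult_right_mono) auto
  hence "1 \<le> exp (1/t) * fact (Suc k) * t ^ Suc k"
    using True by (simp add: power_divide)
  hence "exp (-1/t) \<le> exp (-1/t) * (exp (1/t) * fact (Suc k) * t ^ Suc k)"
    by simp
  also have "\<dots> = fact (Suc k) * t ^ Suc k"
    by (simp add: exp_minus field_simps)
  finally show ?thesis
    using True by (simp add: flat_exp_def field_simps)
next
  case False
  have "0 \<le> fact (Suc k) * \<bar>t\<bar>" by simp
  with False show ?thesis by (simp only: flat_exp_def if_False)
qed

lemma flat_exp_has_real_derivative_0: "(flat_exp k has_real_derivative 0) (at 0)"
proof -
  define C :: real where "C = fact (Suc (Suc k))"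
  have bound: "\<bar>(flat_exp k y - flat_exp k 0) / (y - 0)\<bar> \<le> C * \<bar>y\<bar>" for y
  proof (cases "y > 0")
    case True
    hence "flat_exp k y / y = flat_exp (Suc k) y"
      by (simp add: flat_exp_def field_simps)
    thus ?thesis using flat_exp_le[of "Suc k" y] flat_exp_nonneg[of "Suc k" y]
      by (simp add: flat_exp_def C_def)
  next
    case False
    have "0 \<le> C * \<bar>y\<bar>" by (simp add: C_def)
    with False show ?thesis by (simp add: flat_exp_def)
  qed
  have "((\<lambda>y. (flat_exp k y - flat_exp k 0) / (y - 0)) \<longlongrightarrow> 0) (at 0)"
  proof (rule tendsto_sandwich[where f="\<lambda>y. - C * \<bar>y\<bar>" and h="\<lambda>y. C * \<bar>y\<bar>"])
    show "\<forall>\<^sub>F y in at 0. - C * \<bar>y\<bar> \<le> (flat_exp k y - flat_exp k 0) / (y - 0)"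
      using bound by (intro always_eventually allI) (metis abs_le_D2 minus_le_iff mult_minus_left)
    show "\<forall>\<^sub>F y in at 0. (flat_exp k y - flat_exp k 0) / (y - 0) \<le> C * \<bar>y\<bar>"
      using bound by (intro always_eventually allI) (metis abs_le_D1)
  qed (auto intro!: tendsto_eq_intros)
  thus ?thesis by (simp add: has_field_derivative_iff)
qed

lemma flat_exp_has_real_derivative:
  "(flat_exp k has_real_derivative (flat_exp (k+2) t - real k * flat_exp (k+1) t)) (at t)"
proof -
  consider "t > 0" | "t < 0" | "t = 0" by linarith
  then show ?thesis
  proof cases
    case 1
    have ev: "\<forall>\<^sub>F y in nhds t. flat_exp k y = exp (- 1 / y) / y ^ k"
      using eventually_nhds_in_open[of "{0<..}" t] 1
      by (auto elim!: eventually_mono simp: flat_exp_def)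
    have "((\<lambda>y. exp (- 1 / y) / y ^ k) has_real_derivative
        (exp (-1/t) * (1/t^2) * t^k - exp (-1/t) * (real k * t^(k-1))) / (t^k)^2) (at t)"
      using 1 by (auto intro!: derivative_eq_intros simp: power2_eq_square)
    moreover have "(exp (-1/t) * (1/t^2) * t^k - exp (-1/t) * (real k * t^(k-1))) / (t^k)^2
       = flat_exp (k+2) t - real k * flat_exp (k+1) t"
      using 1 by (cases k) (auto simp: flat_exp_def field_simps power2_eq_square)
    ultimately show ?thesis using DERIV_cong_ev[OF refl ev refl] by simp
  next
    case 2
    have ev: "\<forall>\<^sub>F y in nhds t. flat_exp k y = 0"
      using eventually_nhds_in_open[of "{..<0}" t] 2
      by (auto elim!: eventually_mono simp: flat_exp_def)
    have "(flat_exp k has_real_derivative 0) (at t)"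
      using DERIV_cong_ev[OF refl ev refl, of 0] by simp
    thus ?thesis using 2 by (simp add: flat_exp_def)
  next
    case 3
    thus ?thesis using flat_exp_has_real_derivative_0 by (simp add: flat_exp_def)
  qed
qed

lemma flat_exp_sum_pos: "s > 1 \<Longrightarrow> flat_exp 0 (s - t) + flat_exp 0 (t - 1) > 0"
  by (cases "t < s") (auto simp: flat_exp_def add_pos_nonneg add_nonneg_pos)

text \<open>Closed under differentiation (\<open>cutoff_alg1_has_derivative\<close>); this is how smoothness of the
  cutoff is proved, by induction over the generators.\<close>

inductive_set cutoff_alg1 :: "real \<Rightarrow> (real \<Rightarrow> real) set" for s where
  const: "(\<lambda>t. c) \<in> cutoff_alg1 s"
| flat_left: "(\<lambda>t. flat_exp k (s - t)) \<in> cutoff_alg1 s"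
| flat_right: "(\<lambda>t. flat_exp k (t - 1)) \<in> cutoff_alg1 s"
| inverse: "(\<lambda>t. inverse (flat_exp 0 (s - t) + flat_exp 0 (t - 1))) \<in> cutoff_alg1 s"
| add: "f \<in> cutoff_alg1 s \<Longrightarrow> g \<in> cutoff_alg1 s \<Longrightarrow> (\<lambda>t. f t + g t) \<in> cutoff_alg1 s"
| mult: "f \<in> cutoff_alg1 s \<Longrightarrow> g \<in> cutoff_alg1 s \<Longrightarrow> (\<lambda>t. f t * g t) \<in> cutoff_alg1 s"

lemma cutoff_alg1_diff: "f \<in> cutoff_alg1 s \<Longrightarrow> g \<in> cutoff_alg1 s \<Longrightarrow> (\<lambda>t. f t - g t) \<in> cutoff_alg1 s"
proof -
  assume "f \<in> cutoff_alg1 s" "g \<in> cutoff_alg1 s"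
  hence "(\<lambda>t. f t + (-1) * g t) \<in> cutoff_alg1 s"
    by (intro cutoff_alg1.add cutoff_alg1.mult cutoff_alg1.const)
  thus ?thesis by simp
qed

lemma cutoff_alg1_inverse_has_derivative:
  assumes "s > 1"
  shows "\<exists>f'\<in>cutoff_alg1 s. \<forall>t.
    ((\<lambda>t. inverse (flat_exp 0 (s - t) + flat_exp 0 (t - 1))) has_real_derivative f' t) (at t)"
proof -
  define S where "S t = flat_exp 0 (s - t) + flat_exp 0 (t - 1)" for t
  define S' where "S' t = flat_exp 2 (t - 1) - flat_exp 2 (s - t)" for t
  have flat0: "(flat_exp 0 has_real_derivative flat_exp 2 t) (at t)" for t
    using flat_exp_has_real_derivative[of 0 t] by (simp add: numeral_2_eq_2)
  have "(S has_real_derivative flat_exp 2 (s - t) * (-1) + flat_exp 2 (t - 1) * 1) (at t)" for t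
    unfolding S_def
    by (intro DERIV_add DERIV_chain2[OF flat0]; auto intro!: derivative_eq_intros)
  hence dS: "(S has_real_derivative S' t) (at t)" for t by (simp add: S'_def)
  have "((\<lambda>t. inverse (S t)) has_real_derivative - (inverse (S t) * S' t * inverse (S t))) (at t)" for t
    using flat_exp_sum_pos[OF assms(1), of t] by (intro DERIV_inverse'[OF dS]) (simp add: S_def)
  moreover have "(\<lambda>t. (-1) * (S' t * (inverse (S t) * inverse (S t)))) \<in> cutoff_alg1 s"
    unfolding S_def S'_def by (intro cutoff_alg1.mult cutoff_alg1_diff cutoff_alg1.intros)
  ultimately show ?thesis
    by (intro bexI[of _ "\<lambda>t. (-1) * (S' t * (inverse (S t) * inverse (S t)))"])
       (auto simp: algebra_simps S_def)
qed

lemma cutoff_alg1_has_derivative: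
  assumes "s > 1" "f \<in> cutoff_alg1 s"
  shows "\<exists>f'\<in>cutoff_alg1 s. \<forall>t. (f has_real_derivative f' t) (at t)"
  using assms(2)
proof induction
  case (const c)
  show ?case by (intro bexI[of _ "\<lambda>t. 0"]) (auto intro: cutoff_alg1.intros)
next
  case (flat_left k)
  define f' where "f' t = (flat_exp (k+2) (s - t) - real k * flat_exp (k+1) (s - t)) * (-1)" for t
  have "f' \<in> cutoff_alg1 s"
    unfolding f'_def[abs_def] by (intro cutoff_alg1.mult cutoff_alg1_diff cutoff_alg1.intros)
  moreover have "((\<lambda>t. flat_exp k (s - t)) has_real_derivative f' t) (at t)" for t
    unfolding f'_def
    by (rule DERIV_chain2[OF flat_exp_has_real_derivative]) (auto intro!: derivative_eq_intros)
  ultimately show ?case by blast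
next
  case (flat_right k)
  define f' where "f' t = (flat_exp (k+2) (t - 1) - real k * flat_exp (k+1) (t - 1)) * 1" for t
  have "f' \<in> cutoff_alg1 s"
    unfolding f'_def[abs_def] by (intro cutoff_alg1.mult cutoff_alg1_diff cutoff_alg1.intros)
  moreover have "((\<lambda>t. flat_exp k (t - 1)) has_real_derivative f' t) (at t)" for t
    unfolding f'_def
    by (rule DERIV_chain2[OF flat_exp_has_real_derivative]) (auto intro!: derivative_eq_intros)
  ultimately show ?case by blast
next
  case inverse
  show ?case by (rule cutoff_alg1_inverse_has_derivative[OF assms(1)])
next
  case (add f g)
  then obtain f' g' where "f' \<in> cutoff_alg1 s" "g' \<in> cutoff_alg1 s"
    "\<forall>t. (f has_real_derivative f' t) (at t)" "\<forall>t. (g has_real_derivative g' t) (at t)"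
    by blast
  thus ?case by (intro bexI[of _ "\<lambda>t. f' t + g' t"]) (auto intro: cutoff_alg1.intros DERIV_add)
next
  case (mult f g)
  then obtain f' g' where "f' \<in> cutoff_alg1 s" "g' \<in> cutoff_alg1 s"
    "\<forall>t. (f has_real_derivative f' t) (at t)" "\<forall>t. (g has_real_derivative g' t) (at t)"
    by blast
  thus ?case using mult.hyps
    by (intro bexI[of _ "\<lambda>t. f' t * g t + g' t * f t"]) (auto intro!: cutoff_alg1.intros DERIV_mult)
qed

lemma continuous_on_cutoff_alg1: "s > 1 \<Longrightarrow> f \<in> cutoff_alg1 s \<Longrightarrow> continuous_on UNIV f"
  using cutoff_alg1_has_derivative[of s f]
  by (metis DERIV_isCont continuous_at_imp_continuous_on)

inductive_set cutoff_alg :: "real \<Rightarrow> (real^'n::finite \<Rightarrow> real) set" for s where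
  const: "(\<lambda>x. c) \<in> cutoff_alg s"
| coord: "(\<lambda>x. x $ i) \<in> cutoff_alg s"
| radial: "h \<in> cutoff_alg1 s \<Longrightarrow> (\<lambda>x. h (norm x ^ 2)) \<in> cutoff_alg s"
| add: "F \<in> cutoff_alg s \<Longrightarrow> G \<in> cutoff_alg s \<Longrightarrow> (\<lambda>x. F x + G x) \<in> cutoff_alg s"
| mult: "F \<in> cutoff_alg s \<Longrightarrow> G \<in> cutoff_alg s \<Longrightarrow> (\<lambda>x. F x * G x) \<in> cutoff_alg s"

lemma continuous_on_cutoff_alg:
  assumes "s > 1" "F \<in> cutoff_alg s"
  shows "continuous_on UNIV F"
  using assms(2)
proof induction
  case (radial h)
  have "continuous_on UNIV h" using continuous_on_cutoff_alg1[OF assms(1) radial] .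
  thus ?case by (rule continuous_on_compose2) (auto intro!: continuous_intros)
qed (auto intro!: continuous_intros)

lemma line_norm_power2_has_real_derivative:
  fixes x :: "real^'n::finite"
  shows "((\<lambda>t. norm (x + t *\<^sub>R axis i 1) ^ 2) has_real_derivative 2 * x $ i) (at 0)"
proof -
  have "norm (x + t *\<^sub>R axis i 1) ^ 2 = norm x ^ 2 + 2 * t * x $ i + t ^ 2" for t
    unfolding power2_norm_eq_inner
    by (simp add: inner_add_left inner_add_right inner_axis inner_axis' inner_axis_axis
        algebra_simps power2_eq_square)
  moreover have "((\<lambda>t. norm x ^ 2 + 2 * t * x $ i + t ^ 2) has_real_derivative 2 * x $ i) (at 0)"
    by (auto intro!: derivative_eq_intros)
  ultimately show ?thesis by simp
qed

lemma cutoff_alg_line_derivative: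
  fixes F :: "real^'n::finite \<Rightarrow> real"
  assumes "s > 1" "F \<in> cutoff_alg s"
  shows "\<exists>F'\<in>cutoff_alg s. \<forall>x. ((\<lambda>t. F (x + t *\<^sub>R axis i 1)) has_real_derivative F' x) (at 0)"
  using assms(2)
proof induction
  case (const c)
  show ?case by (auto intro!: bexI[of _ "\<lambda>x. 0"] cutoff_alg.intros)
next
  case (coord j)
  have "((\<lambda>t. (x + t *\<^sub>R axis i 1) $ j) has_real_derivative (if j = i then 1 else 0)) (at 0)"
    for x :: "real^'n"
    by (auto simp: axis_def intro!: derivative_eq_intros)
  thus ?case by (intro bexI[of _ "\<lambda>x. if j = i then 1 else 0"]) (auto intro: cutoff_alg.intros)
next
  case (radial h)
  obtain h' where h': "h' \<in> cutoff_alg1 s" "\<And>t. (h has_real_derivative h' t) (at t)"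
    using cutoff_alg1_has_derivative[OF assms(1) radial] by blast
  show ?case
    using DERIV_chain2[OF h'(2) line_norm_power2_has_real_derivative]
    by (intro bexI[of _ "\<lambda>x. h' (norm x ^ 2) * (2 * x $ i)"])
      (auto intro!: cutoff_alg.intros h'(1))
next
  case (add F G)
  then obtain F' G' where "F' \<in> cutoff_alg s" "G' \<in> cutoff_alg s"
    "\<forall>x. ((\<lambda>t. F (x + t *\<^sub>R axis i 1)) has_real_derivative F' x) (at 0)"
    "\<forall>x. ((\<lambda>t. G (x + t *\<^sub>R axis i 1)) has_real_derivative G' x) (at 0)"
    by blast
  thus ?case by (intro bexI[of _ "\<lambda>x. F' x + G' x"]) (auto intro!: cutoff_alg.add DERIV_add)
next
  case (mult F G)
  then obtain F' G' where "F' \<in> cutoff_alg s" "G' \<in> cutoff_alg s"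
    and d: "\<forall>x. ((\<lambda>t. F (x + t *\<^sub>R axis i 1)) has_real_derivative F' x) (at 0)"
      "\<forall>x. ((\<lambda>t. G (x + t *\<^sub>R axis i 1)) has_real_derivative G' x) (at 0)"
    by blast
  define H where "H x = F' x * G x + G' x * F x" for x
  have "H \<in> cutoff_alg s"
    unfolding H_def[abs_def] using mult.hyps \<open>F' \<in> cutoff_alg s\<close> \<open>G' \<in> cutoff_alg s\<close>
    by (intro cutoff_alg.add cutoff_alg.mult)
  moreover have "((\<lambda>t. F (x + t *\<^sub>R axis i 1) * G (x + t *\<^sub>R axis i 1)) has_real_derivative
      H x) (at 0)" for x
    using DERIV_mult[OF d[rule_format, of x]] by (simp add: H_def)
  ultimately show ?case by blast
qed

lemma
  assumes "s > 1" "F \<in> cutoff_alg s"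
  shows partial_der_cutoff_alg: "partial_der i F \<in> cutoff_alg s"
    and cutoff_alg_has_partial_der:
      "((\<lambda>t. F (x + t *\<^sub>R axis i 1)) has_real_derivative partial_der i F x) (at 0)"
proof -
  obtain F' where F': "F' \<in> cutoff_alg s"
    "\<And>x. ((\<lambda>t. F (x + t *\<^sub>R axis i 1)) has_real_derivative F' x) (at 0)"
    using cutoff_alg_line_derivative[OF assms] by blast
  have "partial_der i F = F'"
    using F'(2) by (auto simp: fun_eq_iff partial_der_def intro!: DERIV_imp_deriv)
  thus "partial_der i F \<in> cutoff_alg s"
    "((\<lambda>t. F (x + t *\<^sub>R axis i 1)) has_real_derivative partial_der i F x) (at 0)"
    using F' by auto
qed

lemma Dlist_cutoff_alg: "s > 1 \<Longrightarrow> F \<in> cutoff_alg s \<Longrightarrow> Dlist is F \<in> cutoff_alg s"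
  by (induction "is") (auto intro: partial_der_cutoff_alg)

lemma smooth_fun_cutoff_alg:
  assumes s: "s > 1" and F: "F \<in> cutoff_alg s"
  shows "smooth_fun F"
  unfolding smooth_fun_def
proof (intro allI conjI)
  fix "is" i x
  have D: "Dlist is F \<in> cutoff_alg s" using Dlist_cutoff_alg[OF s F] .
  show "continuous_on UNIV (Dlist is F)" using continuous_on_cutoff_alg[OF s D] .
  show "(\<lambda>t. Dlist is F (x + t *\<^sub>R axis i 1)) differentiable at 0"
    unfolding real_differentiable_def using cutoff_alg_has_partial_der[OF s D] by blast
qed

lemma cutoff_alg_power: "F \<in> cutoff_alg s \<Longrightarrow> (\<lambda>x. F x ^ j) \<in> cutoff_alg s"
  by (induction j) (auto intro: cutoff_alg.intros)

lemma partial_der_power_mult: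
  assumes s: "s > 1" and F: "F \<in> cutoff_alg s" and P: "P \<in> cutoff_alg s" and j: "j \<ge> 1"
  shows "partial_der i (\<lambda>x. F x ^ j * P x) x
    = F x ^ (j - 1) * (real j * partial_der i F x * P x + partial_der i P x * F x)"
proof -
  have "F x ^ j = F x ^ (j - 1) * F x"
    using j by (metis Suc_diff_le diff_Suc_1 power_Suc2)
  hence "real j * (partial_der i F x * F x ^ (j - 1)) * P x + partial_der i P x * F x ^ j
      = F x ^ (j - 1) * (real j * partial_der i F x * P x + partial_der i P x * F x)"
    by (simp add: algebra_simps)
  moreover have "((\<lambda>t. F (x + t *\<^sub>R axis i 1) ^ j * P (x + t *\<^sub>R axis i 1)) has_real_derivative
      real j * (partial_der i F x * F x ^ (j - 1)) * P x + partial_der i P x * F x ^ j) (at 0)"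
    using DERIV_mult[OF DERIV_power[OF cutoff_alg_has_partial_der[OF s F]]
                        cutoff_alg_has_partial_der[OF s P]] by simp
  ultimately show ?thesis
    unfolding partial_der_def by (metis (no_types, lifting) DERIV_imp_deriv)
qed

lemma Dlist_eq_on_open:
  fixes F :: "real^'n::finite \<Rightarrow> real"
  assumes U: "open U" and c: "\<And>y. y \<in> U \<Longrightarrow> F y = c" and y: "y \<in> U"
  shows "Dlist is F y = (if is = [] then c else 0)"
  using y
proof (induction "is" arbitrary: y)
  case Nil thus ?case using c by simp
next
  case (Cons i "is")
  obtain e where e: "e > 0" "ball y e \<subseteq> U" using U Cons.prems openE by blast
  have ev: "\<forall>\<^sub>F t in nhds 0. Dlist is F (y + t *\<^sub>R axis i 1) = (if is = [] then c else 0)"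
    unfolding eventually_nhds_metric
  proof (intro exI[of _ e] conjI allI impI)
    fix t :: real assume "dist t 0 < e"
    hence "y + t *\<^sub>R axis i 1 \<in> ball y e" by (simp add: dist_norm)
    thus "Dlist is F (y + t *\<^sub>R axis i 1) = (if is = [] then c else 0)"
      using e Cons.IH by blast
  qed (use e in auto)
  have "((\<lambda>t. Dlist is F (y + t *\<^sub>R axis i 1)) has_real_derivative 0) (at 0)"
    using DERIV_cong_ev[OF refl ev refl] by simp
  thus ?case by (simp add: partial_der_def DERIV_imp_deriv)
qed

definition cutoff1 :: "real \<Rightarrow> real \<Rightarrow> real" where
  "cutoff1 s t = flat_exp 0 (s - t) * inverse (flat_exp 0 (s - t) + flat_exp 0 (t - 1))"

lemma cutoff1_cutoff_alg1: "cutoff1 s \<in> cutoff_alg1 s"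
  unfolding cutoff1_def[abs_def] by (intro cutoff_alg1.intros)

lemma
  assumes "s > 1"
  shows cutoff1_nonneg: "0 \<le> cutoff1 s t"
    and cutoff1_le_1: "cutoff1 s t \<le> 1"
    and cutoff1_eq_1: "t \<le> 1 \<Longrightarrow> cutoff1 s t = 1"
    and cutoff1_eq_0: "t \<ge> s \<Longrightarrow> cutoff1 s t = 0"
  using flat_exp_sum_pos[OF assms, of t] flat_exp_nonneg[of 0 "t - 1"] flat_exp_nonneg[of 0 "s - t"]
  by (auto simp: cutoff1_def flat_exp_def field_simps)

definition cutoff :: "real \<Rightarrow> real^'n::finite \<Rightarrow> real" where
  "cutoff s x = cutoff1 s (norm x ^ 2)"

lemma cutoff_cutoff_alg: "cutoff s \<in> cutoff_alg s"
  unfolding cutoff_def[abs_def] by (intro cutoff_alg.intros cutoff1_cutoff_alg1)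

lemma
  fixes x :: "real^'n::finite"
  assumes "s > 1"
  shows cutoff_nonneg: "0 \<le> cutoff s x"
    and cutoff_le_1: "cutoff s x \<le> 1"
    and cutoff_eq_1: "norm x \<le> 1 \<Longrightarrow> cutoff s x = 1"
    and cutoff_eq_0: "norm x \<ge> sqrt s \<Longrightarrow> cutoff s x = 0"
proof -
  show "0 \<le> cutoff s x" "cutoff s x \<le> 1"
    using cutoff1_nonneg[OF assms] cutoff1_le_1[OF assms] by (auto simp: cutoff_def)
  show "norm x \<le> 1 \<Longrightarrow> cutoff s x = 1"
    using cutoff1_eq_1[OF assms] by (simp add: cutoff_def power_le_one)
  assume "norm x \<ge> sqrt s"
  hence "(sqrt s)^2 \<le> norm x ^ 2" using assms by (intro power_mono) auto
  thus "cutoff s x = 0" using cutoff1_eq_0[OF assms] assms by (simp add: cutoff_def)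
qed

lemma Dlist_cutoff_power:
  fixes "is" :: "'n::finite list"
  assumes s: "s > 1" and len: "length is \<le> k"
  shows "\<exists>P\<in>cutoff_alg s. \<forall>x. Dlist is (\<lambda>x. cutoff s x ^ k) x = cutoff s x ^ (k - length is) * P x"
  using len
proof (induction "is")
  case Nil
  show ?case by (intro bexI[of _ "\<lambda>x. 1"]) (auto intro: cutoff_alg.intros)
next
  case (Cons i "is")
  then obtain P where P: "P \<in> cutoff_alg s"
    "\<And>x. Dlist is (\<lambda>x. cutoff s x ^ k) x = cutoff s x ^ (k - length is) * P x"
    by auto
  define j where "j = k - length is"
  have j: "j \<ge> 1" "k - length (i # is) = j - 1" using Cons.prems by (auto simp: j_def)
  define Q where "Q x = real j * partial_der i (cutoff s) x * P x + partial_der i P x * cutoff s x"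
    for x
  have "Q \<in> cutoff_alg s"
    unfolding Q_def[abs_def]
    using cutoff_alg.add[OF cutoff_alg.mult[OF cutoff_alg.mult[OF cutoff_alg.const
            partial_der_cutoff_alg[OF s cutoff_cutoff_alg]] P(1)]
          cutoff_alg.mult[OF partial_der_cutoff_alg[OF s P(1)] cutoff_cutoff_alg]]
    by simp
  moreover have "Dlist is (\<lambda>x. cutoff s x ^ k) = (\<lambda>x. cutoff s x ^ j * P x)"
    using P(2) by (auto simp: j_def)
  hence "Dlist (i # is) (\<lambda>x. cutoff s x ^ k) x = cutoff s x ^ (j - 1) * Q x" for x
    using partial_der_power_mult[OF s cutoff_cutoff_alg P(1) j(1)] by (simp add: Q_def)
  ultimately show ?case unfolding j(2) by blast
qed

lemma Dalpha_eq_Dlist: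
  obtains "is" where "length is = size \<alpha>" "\<And>f. Dalpha \<alpha> f = Dlist is f"
proof -
  have "mset (SOME is. mset is = \<alpha>) = \<alpha>" by (rule someI_ex) (rule ex_mset)
  hence "length (SOME is. mset is = \<alpha>) = size \<alpha>" by (metis size_mset)
  thus ?thesis using that by (auto simp: Dalpha_def)
qed

definition Dalpha_abs_sum :: "nat \<Rightarrow> (real^'n::finite \<Rightarrow> real) \<Rightarrow> real^'n \<Rightarrow> real" where
  "Dalpha_abs_sum m \<phi> x = (\<Sum>\<alpha>\<in>{\<alpha>. size \<alpha> = m}. \<bar>Dalpha \<alpha> \<phi> x\<bar>)"

definition closed_shell :: "real \<Rightarrow> real \<Rightarrow> (real^'n::finite) set" where
  "closed_shell r R = {x. r \<le> norm x \<and> norm x \<le> R}"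

text \<open>Bounding the derivatives of order \<open>m\<close> by \<open>\<Phi> powr (1/lam)\<close> is what lets Young's inequality
  control the derivative terms of the tested inequality by the term \<open>b |u|^lam \<Phi>\<close>.\<close>

definition admissible_cutoff ::
    "real \<Rightarrow> real \<Rightarrow> nat \<Rightarrow> real \<Rightarrow> (real^'n::finite \<Rightarrow> real) \<Rightarrow> bool" where
  "admissible_cutoff R lam m M \<Phi> \<longleftrightarrow> test_fun \<Phi> \<and> (\<forall>y. 0 \<le> \<Phi> y \<and> \<Phi> y \<le> 1)
     \<and> (\<forall>y. norm y \<le> 1 \<longrightarrow> \<Phi> y = 1) \<and> (\<forall>y. R \<le> norm y \<longrightarrow> \<Phi> y = 0)
     \<and> (\<forall>y. Dalpha_abs_sum m \<Phi> y \<le> M * \<Phi> y powr (1/lam) * indicator (closed_shell 1 R) y)"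

lemma power_le_powr_power:
  fixes x lam :: real
  assumes "0 \<le> x" "x \<le> 1" "lam > 0" "real k / lam \<le> real j" "k > 0"
  shows "x ^ j \<le> (x ^ k) powr (1/lam)"
proof (cases "x = 0")
  case True
  have "real j > 0" using assms by (smt (verit) divide_pos_pos of_nat_0_less_iff)
  thus ?thesis using True assms by (simp add: power_0_left)
next
  case False
  hence "(x ^ k) powr (1/lam) = x powr (real k / lam)" "x ^ j = x powr real j"
    using assms by (simp_all add: powr_realpow[symmetric] powr_powr)
  thus ?thesis using assms False by (simp add: powr_mono')
qed

lemma Dlist_cutoff_power_le:
  fixes "is" :: "'n::finite list"
  assumes s: "s > 1" and lam: "lam > 0" and len: "length is < k"
    and k: "real k / lam \<le> real (k - length is)"
  shows "\<exists>C\<ge>0. \<forall>y. \<bar>Dlist is (\<lambda>x. cutoff s x ^ k) y\<bar> \<le> C * (cutoff s y ^ k) powr (1/lam)"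
proof -
  obtain P where P: "P \<in> cutoff_alg s"
    "\<And>x. Dlist is (\<lambda>x. cutoff s x ^ k) x = cutoff s x ^ (k - length is) * P x"
    using Dlist_cutoff_power[OF s, of "is" k] len by auto
  have "compact (P ` cball 0 (sqrt s))"
    using continuous_on_cutoff_alg[OF s P(1)]
    by (intro compact_continuous_image) (auto intro: continuous_on_subset)
  then obtain C where C: "\<And>y. y \<in> cball 0 (sqrt s) \<Longrightarrow> \<bar>P y\<bar> \<le> C"
    using compact_imp_bounded bounded_iff by (metis image_eqI real_norm_def)
  have "\<bar>Dlist is (\<lambda>x. cutoff s x ^ k) y\<bar> \<le> max C 0 * (cutoff s y ^ k) powr (1/lam)" for y
  proof (cases "y \<in> cball 0 (sqrt s)")
    case True
    have "\<bar>Dlist is (\<lambda>x. cutoff s x ^ k) y\<bar> = cutoff s y ^ (k - length is) * \<bar>P y\<bar>"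
      using P(2) cutoff_nonneg[OF s, of y] by (simp add: abs_mult)
    also have "\<dots> \<le> (cutoff s y ^ k) powr (1/lam) * max C 0"
      using C[OF True] cutoff_nonneg[OF s] cutoff_le_1[OF s] len lam k
      by (intro mult_mono power_le_powr_power) auto
    finally show ?thesis by (simp add: mult.commute)
  next
    case False
    hence "Dlist is (\<lambda>x. cutoff s x ^ k) y = 0"
      using P(2)[of y] cutoff_eq_0[OF s, of y] len by (simp add: zero_power)
    thus ?thesis by simp
  qed
  thus ?thesis by (intro exI[of _ "max C 0"] conjI allI) simp_all
qed

lemma Dlist_eq_0_off_closed_shell:
  fixes F :: "real^'n::finite \<Rightarrow> real"
  assumes F1: "\<And>y. norm y \<le> 1 \<Longrightarrow> F y = c" and F0: "\<And>y. R \<le> norm y \<Longrightarrow> F y = 0"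
    and "is \<noteq> []" and y: "y \<notin> closed_shell 1 R"
  shows "Dlist is F y = 0"
proof -
  consider "norm y < 1" | "norm y > R" using y by (force simp: closed_shell_def)
  thus ?thesis
  proof cases
    case 1
    have "Dlist is F y = (if is = [] then c else 0)"
      by (rule Dlist_eq_on_open[of "ball 0 1"]) (use 1 F1 in auto)
    thus ?thesis using \<open>is \<noteq> []\<close> by simp
  next
    case 2
    have "Dlist is F y = (if is = [] then 0 else 0)"
      by (rule Dlist_eq_on_open[of "{y. norm y > R}"])
         (use 2 F0 in \<open>auto intro: open_Collect_less continuous_intros\<close>)
    thus ?thesis by simp
  qed
qed

lemma exists_exponent_gap:
  fixes lam :: real
  assumes lam: "lam > 1"
  shows "\<exists>k. k > m \<and> real k / lam \<le> real (k - m)"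
proof -
  define k where "k = nat \<lceil>real m * lam / (lam - 1)\<rceil> + 1"
  have k: "real k \<ge> real m * lam / (lam - 1)" unfolding k_def by linarith
  moreover have "real m * lam / (lam - 1) \<ge> real m"
    using lam by (simp add: field_simps)
  ultimately have km: "k > m" unfolding k_def by linarith
  have "real k \<le> real (k - m) * lam"
    using k km lam by (simp add: of_nat_diff field_simps)
  thus ?thesis using km lam by (auto simp: field_simps)
qed

lemma Dalpha_abs_sum_le:
  fixes \<Phi> :: "real^'n::finite \<Rightarrow> real"
  assumes w: "\<And>y. w y \<ge> 0"
    and C: "\<And>\<alpha>. size \<alpha> = m \<Longrightarrow> \<exists>C\<ge>0. \<forall>y. \<bar>Dalpha \<alpha> \<Phi> y\<bar> \<le> C * w y"
  shows "\<exists>M>0. \<forall>y. Dalpha_abs_sum m \<Phi> y \<le> M * w y"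
proof -
  obtain C where C: "\<And>\<alpha> y. size \<alpha> = m \<Longrightarrow> \<bar>Dalpha \<alpha> \<Phi> y\<bar> \<le> C \<alpha> * w y"
    "\<And>\<alpha>. size \<alpha> = m \<Longrightarrow> C \<alpha> \<ge> 0"
    using C by metis
  define M where "M = 1 + (\<Sum>\<alpha>\<in>{\<alpha>. size \<alpha> = m}. C \<alpha>)"
  have "M > 0" unfolding M_def using C(2) by (smt (verit) mem_Collect_eq sum_nonneg)
  moreover have "Dalpha_abs_sum m \<Phi> y \<le> M * w y" for y
  proof -
    have "Dalpha_abs_sum m \<Phi> y \<le> (\<Sum>\<alpha>\<in>{\<alpha>. size \<alpha> = m}. C \<alpha> * w y)"
      unfolding Dalpha_abs_sum_def using C(1) by (intro sum_mono) simp
    also have "\<dots> \<le> M * w y"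
      unfolding M_def sum_distrib_right[symmetric] using w by (intro mult_right_mono) auto
    finally show ?thesis .
  qed
  ultimately show ?thesis by blast
qed

lemma admissible_cutoff_exists:
  fixes R lam :: real and m :: nat
  assumes R: "R > 1" and lam: "lam > 1" and m: "m \<ge> 1"
  shows "\<exists>(\<Phi>::real^'n::finite \<Rightarrow> real) M. M > 0 \<and> admissible_cutoff R lam m M \<Phi>"
proof -
  define s where "s = R ^ 2"
  have s: "s > 1" and sqrt_s: "sqrt s = R" using R by (auto simp: s_def one_less_power)
  obtain k where km: "k > m" and kexp: "real k / lam \<le> real (k - m)"
    using exists_exponent_gap[OF lam] by blast
  define \<Phi> where "\<Phi> x = cutoff s x ^ k" for x :: "real^'n"
  have \<Phi>01: "0 \<le> \<Phi> y" "\<Phi> y \<le> 1" for y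
    using cutoff_nonneg[OF s, of y] cutoff_le_1[OF s, of y] by (auto simp: \<Phi>_def power_le_one)
  have \<Phi>1: "norm y \<le> 1 \<Longrightarrow> \<Phi> y = 1" and \<Phi>0: "R \<le> norm y \<Longrightarrow> \<Phi> y = 0" for y
    using cutoff_eq_1[OF s, of y] cutoff_eq_0[OF s, of y] km sqrt_s by (auto simp: \<Phi>_def)
  have "{x. \<Phi> x \<noteq> 0} \<subseteq> cball 0 R" using \<Phi>0 by (force simp: not_le)
  hence "bounded {x. \<Phi> x \<noteq> 0}" by (rule bounded_subset[OF bounded_cball])
  moreover have "smooth_fun \<Phi>"
    unfolding \<Phi>_def[abs_def] by (rule smooth_fun_cutoff_alg[OF s cutoff_alg_power[OF cutoff_cutoff_alg]])
  ultimately have test: "test_fun \<Phi>" unfolding test_fun_def compact_closure by blast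
  have "\<exists>C\<ge>0. \<forall>y. \<bar>Dalpha \<alpha> \<Phi> y\<bar> \<le> C * (\<Phi> y powr (1/lam) * indicator (closed_shell 1 R) y)"
    if "size \<alpha> = m" for \<alpha>
  proof -
    obtain "is" where "length is = size \<alpha>" "\<And>f. Dalpha \<alpha> f = Dlist is f"
      using Dalpha_eq_Dlist[of \<alpha>] by blast
    hence "is": "length is = m" "Dalpha \<alpha> \<Phi> = Dlist is \<Phi>" using that by auto
    have kis: "real k / lam \<le> real (k - length is)" using kexp "is"(1) by simp
    obtain C where C: "C \<ge> 0" "\<And>y. \<bar>Dlist is \<Phi> y\<bar> \<le> C * \<Phi> y powr (1/lam)"
      using Dlist_cutoff_power_le[OF s _ _ kis] lam km "is"(1) unfolding \<Phi>_def[abs_def] by auto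
    have "Dlist is \<Phi> y = 0" if "y \<notin> closed_shell 1 R" for y
      using Dlist_eq_0_off_closed_shell[of \<Phi> 1 R "is", OF \<Phi>1 \<Phi>0 _ that] m "is"(1)
      by (metis One_nat_def list.size(3) not_one_le_zero)
    thus ?thesis using C "is"(2) by (intro exI[of _ C]) (auto simp: indicator_def)
  qed
  hence "\<exists>M>0. \<forall>y. Dalpha_abs_sum m \<Phi> y \<le> M * (\<Phi> y powr (1/lam) * indicator (closed_shell 1 R) y)"
    by (intro Dalpha_abs_sum_le) auto
  then obtain M where "M > 0"
    "\<And>y. Dalpha_abs_sum m \<Phi> y \<le> M * (\<Phi> y powr (1/lam) * indicator (closed_shell 1 R) y)"
    by blast
  thus ?thesis using test \<Phi>01 \<Phi>1 \<Phi>0 unfolding admissible_cutoff_def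
    by (intro exI[of _ \<Phi>] exI[of _ M]) (auto simp: mult.assoc)
qed

section \<open>Rescaled test functions\<close>

lemma smooth_fun_has_partial_der:
  assumes "smooth_fun F"
  shows "((\<lambda>t. Dlist is F (y + t *\<^sub>R axis i 1)) has_real_derivative partial_der i (Dlist is F) y) (at 0)"
proof -
  have "(\<lambda>t. Dlist is F (y + t *\<^sub>R axis i 1)) differentiable at 0"
    using assms by (simp add: smooth_fun_def)
  thus ?thesis unfolding partial_der_def by (simp add: DERIV_deriv_iff_real_differentiable)
qed

lemma smooth_fun_scaled_line_derivative:
  fixes F :: "real^'n::finite \<Rightarrow> real"
  assumes F: "smooth_fun F"
  shows "((\<lambda>t. Dlist is F (c *\<^sub>R (x + t *\<^sub>R axis i 1))) has_real_derivative
      c * partial_der i (Dlist is F) (c *\<^sub>R x)) (at 0)"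
proof -
  have d0: "((\<lambda>t. Dlist is F (c *\<^sub>R x + t *\<^sub>R axis i 1)) has_real_derivative
       partial_der i (Dlist is F) (c *\<^sub>R x)) (at (c * 0))"
    using smooth_fun_has_partial_der[OF F, of "is" "c *\<^sub>R x" i] by simp
  have "((\<lambda>t. Dlist is F (c *\<^sub>R x + (c * t) *\<^sub>R axis i 1)) has_real_derivative
      partial_der i (Dlist is F) (c *\<^sub>R x) * c) (at 0)"
    by (rule DERIV_chain2[where g="\<lambda>t. c * t" and x=0, OF d0]) (auto intro!: derivative_eq_intros)
  thus ?thesis by (simp add: scaleR_add_right mult.commute)
qed

lemma Dlist_scale:
  fixes F :: "real^'n::finite \<Rightarrow> real"
  assumes F: "smooth_fun F"
  shows "Dlist is (\<lambda>x. F (c *\<^sub>R x)) x = c ^ length is * Dlist is F (c *\<^sub>R x)"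
proof (induction "is" arbitrary: x)
  case Nil thus ?case by simp
next
  case (Cons i "is")
  have "((\<lambda>t. Dlist is (\<lambda>x. F (c *\<^sub>R x)) (x + t *\<^sub>R axis i 1)) has_real_derivative
      c ^ Suc (length is) * partial_der i (Dlist is F) (c *\<^sub>R x)) (at 0)"
    using DERIV_cmult[OF smooth_fun_scaled_line_derivative[OF F], of "c ^ length is" "is" c x i]
    by (simp add: Cons.IH algebra_simps)
  thus ?case by (simp add: partial_der_def DERIV_imp_deriv)
qed

lemma smooth_fun_scale:
  fixes F :: "real^'n::finite \<Rightarrow> real"
  assumes F: "smooth_fun F"
  shows "smooth_fun (\<lambda>x. F (c *\<^sub>R x))"
  unfolding smooth_fun_def
proof (intro allI conjI)
  fix "is" i x
  have e: "Dlist is (\<lambda>x. F (c *\<^sub>R x)) = (\<lambda>x. c ^ length is * Dlist is F (c *\<^sub>R x))"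
    using Dlist_scale[OF F] by auto
  have "continuous_on UNIV (Dlist is F)" using F by (simp add: smooth_fun_def)
  hence "continuous_on UNIV (\<lambda>x. Dlist is F (c *\<^sub>R x))"
    by (rule continuous_on_compose2) (auto intro!: continuous_intros)
  thus "continuous_on UNIV (Dlist is (\<lambda>x. F (c *\<^sub>R x)))"
    unfolding e by (intro continuous_intros)
  show "(\<lambda>t. Dlist is (\<lambda>x. F (c *\<^sub>R x)) (x + t *\<^sub>R axis i 1)) differentiable at 0"
    unfolding e real_differentiable_def
    using DERIV_cmult[OF smooth_fun_scaled_line_derivative[OF F], of "c ^ length is" "is" c x i]
    by blast
qed

lemma test_fun_scale:
  fixes F :: "real^'n::finite \<Rightarrow> real"
  assumes F: "test_fun F" and c: "c > 0"
  shows "test_fun (\<lambda>x. F (c *\<^sub>R x))"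
proof -
  have "bounded {x. F x \<noteq> 0}" using F by (simp add: test_fun_def compact_closure)
  then obtain B where B: "\<And>y. F y \<noteq> 0 \<Longrightarrow> norm y \<le> B" by (auto simp: bounded_iff)
  have "{x. F (c *\<^sub>R x) \<noteq> 0} \<subseteq> cball 0 (B / c)"
  proof
    fix x assume "x \<in> {x. F (c *\<^sub>R x) \<noteq> 0}"
    hence "norm (c *\<^sub>R x) \<le> B" using B by blast
    thus "x \<in> cball 0 (B / c)" using c by (simp add: field_simps)
  qed
  hence "bounded {x. F (c *\<^sub>R x) \<noteq> 0}" by (rule bounded_subset[OF bounded_cball])
  thus ?thesis using smooth_fun_scale[of F c] F by (simp add: test_fun_def compact_closure)
qed

lemma Dalpha_scale:
  fixes F :: "real^'n::finite \<Rightarrow> real"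
  assumes F: "smooth_fun F"
  shows "Dalpha \<alpha> (\<lambda>x. F (c *\<^sub>R x)) x = c ^ size \<alpha> * Dalpha \<alpha> F (c *\<^sub>R x)"
proof -
  obtain "is" where "length is = size \<alpha>" "\<And>f. Dalpha \<alpha> f = Dlist is f"
    using Dalpha_eq_Dlist[of \<alpha>] by blast
  thus ?thesis by (simp add: Dlist_scale[OF F])
qed

section \<open>Real inequalities\<close>

lemma young_absorb:
  fixes a b U phi K d c lam :: real
  assumes lam: "lam > 1" and a: "a > 0" and b: "b > 0" and U: "U \<ge> 0" and phi: "phi \<ge> 0"
    and K: "K \<ge> 0" and d: "d > 0" and c: "c > 0" and cle: "c \<le> a powr (- lam) * b"
  shows "a * U * K * phi powr (1/lam) \<le>
     d powr lam / lam * (b * U powr lam) * phi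
     + d powr (- (lam/(lam-1))) / (lam/(lam-1)) * K powr (lam/(lam-1)) * c powr (- 1/(lam-1))"
proof -
  define q where "q = lam/(lam-1)"
  have q: "q > 1" "1/lam + 1/q = 1" using lam by (auto simp: q_def field_simps)
  define X where "X = d * b powr (1/lam) * U * phi powr (1/lam)"
  define Y where "Y = a * b powr (-1/lam) * K / d"
  have X0: "X \<ge> 0" and Y0: "Y \<ge> 0" using assms by (auto simp: X_def Y_def)
  have XY: "X * Y = a * U * K * phi powr (1/lam)"
  proof -
    have "b powr (1/lam) * b powr (-1/lam) = 1" using b by (simp add: powr_add[symmetric])
    hence "X * Y = a * U * K * phi powr (1/lam) * (b powr (1/lam) * b powr (-1/lam)) * (d / d)"
      unfolding X_def Y_def by (simp add: field_simps)
    thus ?thesis using d \<open>b powr (1/lam) * b powr (-1/lam) = 1\<close> by simp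
  qed
  have Xp: "X powr lam = d powr lam * (b * U powr lam) * phi"
  proof -
    have "X powr lam = d powr lam * (b powr (1/lam)) powr lam * U powr lam * (phi powr (1/lam)) powr lam"
      unfolding X_def using assms by (simp add: powr_mult)
    also have "(b powr (1/lam)) powr lam = b" using lam b by (simp add: powr_powr)
    also have "(phi powr (1/lam)) powr lam = phi" using lam phi
      by (cases "phi = 0") (simp_all add: powr_powr)
    finally show ?thesis by (simp add: algebra_simps)
  qed
  have Yp: "Y powr q \<le> d powr (- q) * K powr q * c powr (- 1/(lam-1))"
  proof -
    have "Y powr q = (a powr (-lam) * b) powr (- 1/(lam-1)) * K powr q * d powr (-q)"
    proof -
      have "Y powr q = a powr q * (b powr (-1/lam)) powr q * K powr q * (inverse d) powr q"
        unfolding Y_def using assms by (simp add: powr_mult divide_inverse)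
      also have "(b powr (-1/lam)) powr q = b powr (- 1/(lam-1))"
        using lam by (simp add: powr_powr q_def)
      also have "(inverse d) powr q = d powr (-q)" using d by (simp add: powr_minus inverse_eq_divide powr_divide)
      also have "a powr q = (a powr (-lam)) powr (- 1/(lam-1))"
        using lam by (simp add: powr_powr q_def)
      finally show ?thesis using a b by (simp add: powr_mult algebra_simps)
    qed
    also have "\<dots> \<le> c powr (- 1/(lam-1)) * K powr q * d powr (-q)"
      using lam c cle by (intro mult_right_mono powr_mono2') auto
    finally show ?thesis by (simp add: algebra_simps)
  qed
  have "a * U * K * phi powr (1/lam) \<le> X powr lam / lam + Y powr q / q"
    unfolding XY[symmetric] by (rule Youngs_inequality[OF lam q(1) q(2) X0 Y0])
  also have "\<dots> \<le> d powr lam / lam * (b * U powr lam) * phi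
     + d powr (- q) / q * K powr q * c powr (- 1/(lam-1))"
    unfolding Xp using Yp q(1) lam by (auto simp: field_simps intro!: divide_right_mono)
  finally show ?thesis by (simp add: q_def)
qed

lemma eq_0_of_le_powr_neg:
  fixes q I Z :: real
  assumes q: "q > 0" and I: "I \<ge> 0" and Z: "Z > 0"
    and H: "\<And>d. d > 0 \<Longrightarrow> I \<le> d powr (- q) / q * Z"
  shows "I = 0"
proof (rule ccontr)
  assume "I \<noteq> 0"
  hence Ip: "I > 0" using I by simp
  define d where "d = (2 * Z / (q * I)) powr (1/q)"
  have d: "d > 0" using Ip Z q by (simp add: d_def)
  have "d powr (- q) = (2 * Z / (q * I)) powr (1/q * (- q))"
    unfolding d_def by (rule powr_powr)
  also have "\<dots> = q * I / (2 * Z)" using Ip Z q by (simp add: powr_minus)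
  finally have "d powr (- q) / q * Z = I / 2" using Z q by (simp add: field_simps)
  moreover have "I \<le> d powr (- q) / q * Z" by (rule H[OF d])
  ultimately have "I \<le> I / 2" by metis
  thus False using Ip by linarith
qed

lemma powr_le_of_young_bounds:
  fixes lam I W Z :: real
  assumes lam: "lam > 1" and I: "I \<ge> 0" and W: "W \<ge> 0" and Z: "Z > 0"
    and H: "\<And>d. d > 0 \<Longrightarrow> I \<le> d powr lam / lam * W + d powr (- (lam/(lam-1))) / (lam/(lam-1)) * Z"
  shows "I powr lam \<le> W * Z powr (lam - 1)"
proof -
  define q where "q = lam/(lam-1)"
  have q: "q > 1" "1/lam + 1/q = 1" "1/q = (lam-1)/lam" using lam by (auto simp: q_def field_simps)
  show ?thesis
  proof (cases "W > 0")
    case True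
    define t where "t = Z / W"
    have t: "t > 0" using True Z by (simp add: t_def)
    define d where "d = t powr (1/(lam*q))"
    have d: "d > 0" using t by (simp add: d_def)
    have d1: "d powr lam = t powr (1/q)" using t lam q(1) by (simp add: d_def powr_powr field_simps)
    have d2: "d powr (-q) = t powr (-1/lam)" using t lam q(1) by (simp add: d_def powr_powr field_simps)
    have e1: "t powr (1/q) * W = Z powr (1/q) * W powr (1/lam)"
    proof -
      have "t powr (1/q) * W = Z powr (1/q) * (W powr (1/q))/ W powr (1/q) * W / W powr (1/q)"
        using True Z by (simp add: t_def powr_divide)
      also have "\<dots> = Z powr (1/q) * W powr (1 - 1/q)"
        using True by (simp add: powr_diff)
      moreover have "1 - 1/q = 1/lam" using q(2) by linarith
      ultimately show ?thesis by (simp add: algebra_simps)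
    qed
    have e2: "t powr (-1/lam) * Z = Z powr (1/q) * W powr (1/lam)"
    proof -
      have "t powr (-1/lam) * Z = Z powr (-1/lam) * Z * W powr (1/lam)"
        using True Z by (simp add: t_def powr_divide powr_minus_divide divide_simps)
      also have "Z powr (-1/lam) * Z = Z powr (-1/lam + 1)"
        using Z powr_add[of Z "-1/lam" 1] by (simp del: minus_divide_left)
      also have "-1/lam + 1 = 1/q" using q(2) by linarith
      finally show ?thesis by (simp add: algebra_simps)
    qed
    have "I \<le> d powr lam / lam * W + d powr (-q) / q * Z" using H[OF d] by (simp add: q_def)
    also have "\<dots> = (1/lam + 1/q) * (Z powr (1/q) * W powr (1/lam))"
      using e1 e2 by (simp add: d1 d2 field_simps)
    also have "\<dots> = Z powr (1/q) * W powr (1/lam)" using q(2) by simp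
    finally have "I \<le> Z powr (1/q) * W powr (1/lam)" .
    hence "I powr lam \<le> (Z powr (1/q) * W powr (1/lam)) powr lam"
      using I lam by (intro powr_mono2) auto
    also have "\<dots> = Z powr (lam - 1) * W"
      using Z True lam q(3) by (simp add: powr_mult powr_powr)
    finally show ?thesis by (simp add: mult.commute)
  next
    case False
    hence "W = 0" using W by simp
    moreover have "I \<le> d powr (- q) / q * Z" if "d > 0" for d
      using H[OF that] \<open>W = 0\<close> by (simp add: q_def)
    ultimately show ?thesis using eq_0_of_le_powr_neg[of q I Z] q(1) I Z by simp
  qed
qed

lemma powr_one_minus_lower_bound:
  fixes lam t :: real
  assumes lam: "lam > 1" and t: "t \<ge> 1"
  shows "(lam - 1) * t powr (- lam) * (t - 1) \<le> 1 - t powr (1 - lam)"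
proof -
  define y where "y = 1 / t"
  have y: "y > 0" "y \<le> 1" using t by (auto simp: y_def)
  have "(y powr lam) powr ((lam-1)/lam) * 1 powr (1/lam) \<le> (lam-1)/lam * y powr lam + 1/lam * 1"
    using y lam by (intro Youngs_inequality_0) (auto simp: field_simps)
  hence yb: "y powr (lam - 1) \<le> (lam-1)/lam * y powr lam + 1/lam"
    using y lam by (simp add: powr_powr)
  have "t powr (1 - lam) = y powr (lam - 1)" using t
    by (simp add: y_def powr_divide powr_minus_divide[symmetric] powr_minus)
  moreover have "t powr (-lam) * t = y powr (lam - 1)" using t
    by (simp add: y_def powr_minus_divide powr_diff powr_divide divide_simps)
  moreover have "t powr (-lam) = y powr lam" using t
    by (simp add: y_def powr_minus_divide powr_divide)
  ultimately show ?thesis using yb lam by (simp add: algebra_simps field_simps)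
qed

lemma min_le_const_mult_one_minus_powr:
  fixes lam t :: real
  assumes lam: "lam > 1" and t: "t \<ge> 1"
  shows "min 1 (t - 1) \<le> max (1 / (1 - 2 powr (1 - lam))) (2 powr lam / (lam - 1)) * (1 - t powr (1 - lam))"
proof -
  define C where "C = max (1 / (1 - 2 powr (1 - lam))) (2 powr lam / (lam - 1))"
  have h2: "2 powr (1 - lam) < 1" using lam by (simp add: powr_less_one)
  have "t powr (1 - lam) \<le> t powr 0" using t lam by (intro powr_mono) auto
  hence nn: "1 - t powr (1 - lam) \<ge> 0" using t by simp
  show ?thesis
  proof (cases "t \<ge> 2")
    case True
    have "t powr (1 - lam) \<le> 2 powr (1 - lam)" using True lam by (intro powr_mono2') auto
    hence "1 \<le> (1 - t powr (1 - lam)) / (1 - 2 powr (1 - lam))" using h2 by (simp add: field_simps)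
    also have "\<dots> \<le> C * (1 - t powr (1 - lam))"
      using nn h2 by (simp add: C_def divide_inverse mult.commute mult_left_mono)
    finally show ?thesis unfolding C_def by simp
  next
    case False
    have "(lam - 1) * t powr (- lam) * (t - 1) \<le> 1 - t powr (1 - lam)"
      by (rule powr_one_minus_lower_bound[OF lam t])
    moreover have "t powr (-lam) \<ge> 2 powr (-lam)" using False t lam by (intro powr_mono2') auto
    ultimately have "(lam - 1) * 2 powr (- lam) * (t - 1) \<le> 1 - t powr (1 - lam)"
      using t lam by (smt (verit, best) mult_left_mono mult_right_mono)
    hence "t - 1 \<le> 2 powr lam / (lam - 1) * (1 - t powr (1 - lam))"
      using lam by (simp add: powr_minus field_simps)
    also have "\<dots> \<le> C * (1 - t powr (1 - lam))" by (rule mult_right_mono[OF _ nn]) (simp add: C_def)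
    finally show ?thesis unfolding C_def by simp
  qed
qed

lemma scaled_remainder_eq:
  fixes r c M V s lam :: real and m n :: nat
  assumes r: "r > 0" and c: "c > 0" and M: "M > 0" and V: "V > 0" and s: "s > 0" and lam: "lam > 1"
  shows "((1/r)^m * M) powr (lam/(lam-1)) * c powr (-1/(lam-1)) * (V * (s * r)^n)
     = (M powr (lam/(lam-1)) * V * s^n) *
       (c * r powr ((real m - real n) * lam + real n)) powr (-1/(lam-1))"
proof -
  define q where "q = lam/(lam-1)"
  define g where "g = (real m - real n) * lam + real n"
  have l1: "lam - 1 > 0" using lam by simp
  have e1: "((1/r)^m * M) powr q = r powr (- (real m * q)) * M powr q"
    using r M by (simp add: powr_mult powr_realpow[symmetric] powr_powr powr_minus_divide
        powr_divide)
  have e2: "(s * r)^n = s^n * r powr real n" using r s by (simp add: power_mult_distrib powr_realpow)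
  have e3: "(c * r powr g) powr (-1/(lam-1)) = c powr (-1/(lam-1)) * r powr (g * (-1/(lam-1)))"
    using r c by (simp add: powr_mult powr_powr)
  have e4: "- (real m * q) + real n = g * (-1/(lam-1))"
    using l1 by (simp add: q_def g_def field_simps)
  have e5: "r powr real n * r powr (- (real m * q)) = r powr (g * (-1/(lam-1)))"
    using e4 by (simp add: powr_add[symmetric] add.commute)
  have "((1/r)^m * M) powr q * c powr (-1/(lam-1)) * (V * (s * r)^n)
      = (M powr q * V * s^n) * c powr (-1/(lam-1)) * (r powr real n * r powr (- (real m * q)))"
    unfolding e1 e2 by (simp add: algebra_simps)
  also have "\<dots> = (M powr q * V * s^n) * (c * r powr g) powr (-1/(lam-1))"
    unfolding e5 e3 by (simp add: algebra_simps)
  finally show ?thesis unfolding q_def g_def .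
qed

lemma le_of_mass_upper_bound:
  fixes lam F P C2 :: real
  assumes lam: "lam > 1" and F: "F > 0" and P: "P > 0" and C2: "C2 > 0"
    and E2: "F \<le> C2 * P powr (-1/(lam-1))"
  shows "P \<le> C2 powr (lam - 1) * F powr (1 - lam)"
proof -
  have "F powr (lam - 1) \<le> (C2 * P powr (-1/(lam-1))) powr (lam - 1)"
    using E2 F lam by (intro powr_mono2) auto
  also have "\<dots> = C2 powr (lam - 1) * P powr (-1/(lam-1) * (lam - 1))"
    using C2 P by (simp add: powr_mult powr_powr)
  also have "-1/(lam-1) * (lam - 1) = -1" using lam by simp
  finally have "F powr (lam - 1) * P \<le> C2 powr (lam - 1)"
    using P by (simp add: powr_minus field_simps)
  hence "F powr (1 - lam) * (F powr (lam - 1) * P) \<le> F powr (1 - lam) * C2 powr (lam - 1)"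
    by (intro mult_left_mono) auto
  moreover have "F powr (1 - lam) * F powr (lam - 1) = 1"
    using F by (simp add: powr_add[symmetric])
  ultimately show ?thesis by (simp add: algebra_simps)
qed

lemma le_of_mass_increment_bound:
  fixes lam F F1 W P C1 :: real
  assumes F: "F > 0" and FW: "F + W \<le> F1" and C1: "C1 > 0"
    and E1: "F powr lam * P \<le> C1 * W"
  shows "P \<le> C1 * F powr (1 - lam) * (F1 / F - 1)"
proof -
  have "F powr lam = F * F powr (lam - 1)"
    using F powr_add[of F 1 "lam - 1"] by simp
  hence "F * (F powr (lam - 1) * P) \<le> C1 * W" using E1 by (simp add: mult.assoc)
  also have "\<dots> \<le> C1 * (F1 - F)" using FW C1 by (intro mult_left_mono) auto
  also have "\<dots> = F * (C1 * (F1 / F - 1))" using F by (simp add: field_simps)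
  finally have "F powr (lam - 1) * P \<le> C1 * (F1 / F - 1)" using F by simp
  hence "F powr (1 - lam) * (F powr (lam - 1) * P) \<le> F powr (1 - lam) * (C1 * (F1 / F - 1))"
    by (intro mult_left_mono) auto
  moreover have "F powr (1 - lam) * F powr (lam - 1) = 1"
    using F by (simp add: powr_add[symmetric])
  ultimately show ?thesis by (simp add: algebra_simps)
qed

text \<open>Both mass estimates together bound \<open>P\<close> by the decrement of \<open>F powr (1 - lam)\<close>, which
  telescopes along a geometric sequence of radii.\<close>

lemma le_of_mass_estimates:
  fixes lam F F1 W P C1 C2 :: real
  assumes lam: "lam > 1" and F: "F > 0" and W: "W \<ge> 0" "F + W \<le> F1" and P: "P > 0"
    and C1: "C1 > 0" and C2: "C2 > 0"
    and E2: "F \<le> C2 * P powr (-1/(lam-1))" and E1: "F powr lam * P \<le> C1 * W"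
  shows "P \<le> max (C2 powr (lam - 1)) C1 * max (1 / (1 - 2 powr (1 - lam))) (2 powr lam / (lam - 1))
    * (F powr (1 - lam) - F1 powr (1 - lam))"
proof -
  define t where "t = F1 / F"
  define Cx where "Cx = max (C2 powr (lam - 1)) C1"
  define Cl where "Cl = max (1 / (1 - 2 powr (1 - lam))) (2 powr lam / (lam - 1))"
  have t: "t \<ge> 1" using W F by (simp add: t_def field_simps)
  have G: "F powr (1 - lam) > 0" using F by simp
  have "P \<le> F powr (1 - lam) * (Cx * min 1 (t - 1))"
  proof (cases "t - 1 \<le> 1")
    case True
    have "P \<le> C1 * F powr (1 - lam) * (t - 1)"
      unfolding t_def by (rule le_of_mass_increment_bound[OF F W(2) C1 E1])
    also have "\<dots> \<le> Cx * F powr (1 - lam) * (t - 1)"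
      using t G by (intro mult_right_mono) (auto simp: Cx_def)
    finally show ?thesis using True by (simp add: algebra_simps)
  next
    case False
    have "P \<le> C2 powr (lam - 1) * F powr (1 - lam)"
      by (rule le_of_mass_upper_bound[OF lam F P C2 E2])
    also have "\<dots> \<le> Cx * F powr (1 - lam)"
      using G by (intro mult_right_mono) (auto simp: Cx_def)
    finally show ?thesis using False by (simp add: algebra_simps)
  qed
  also have "\<dots> \<le> F powr (1 - lam) * (Cx * (Cl * (1 - t powr (1 - lam))))"
    using min_le_const_mult_one_minus_powr[OF lam t] G C1
    by (intro mult_left_mono) (auto simp: Cl_def Cx_def)
  also have "\<dots> = Cx * Cl * (F powr (1 - lam) - F1 powr (1 - lam))"
    using F t by (simp add: t_def powr_divide algebra_simps)
  finally show ?thesis unfolding Cx_def Cl_def .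
qed

section \<open>Essential infima and dyadic sums\<close>

lemma essinf_on_le:
  fixes f :: "real^'n::finite \<Rightarrow> real"
  assumes f: "\<And>x. f x \<ge> 0" and B: "B \<ge> 0"
    and H: "\<And>c. c > 0 \<Longrightarrow> (AE x in lebesgue. x \<in> S \<longrightarrow> c \<le> f x) \<Longrightarrow> c \<le> B"
  shows "essinf_on S f \<le> ennreal B"
  unfolding essinf_on_def
proof (rule Sup_least)
  fix c assume "c \<in> {c. AE x in lebesgue. x \<in> S \<longrightarrow> c \<le> ennreal (f x)}"
  hence c: "AE x in lebesgue. x \<in> S \<longrightarrow> c \<le> ennreal (f x)" by simp
  show "c \<le> ennreal B"
  proof (cases c)
    case (real c0)
    show ?thesis
    proof (cases "c0 > 0")
      case True
      have "AE x in lebesgue. x \<in> S \<longrightarrow> c0 \<le> f x"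
        using c by (rule eventually_mono) (use real True f in \<open>auto simp: ennreal_le_iff\<close>)
      hence "c0 \<le> B" using H True by blast
      thus ?thesis using real by (simp add: ennreal_leI)
    next
      case False thus ?thesis using real by (simp add: ennreal_eq_0_iff)
    qed
  next
    case top
    have "AE x in lebesgue. x \<notin> S"
      using c by (rule eventually_mono) (metis top ennreal_less_top not_le)
    hence "AE x in lebesgue. x \<in> S \<longrightarrow> B + 1 \<le> f x"
      by (rule eventually_mono) simp
    hence "B + 1 \<le> B" using H[of "B + 1"] B by linarith
    thus ?thesis by simp
  qed
qed

lemma essinf_on_antimono:
  "S \<subseteq> T \<Longrightarrow> essinf_on T f \<le> essinf_on S f"
  unfolding essinf_on_def by (rule Sup_subset_mono) (auto elim!: eventually_mono)

lemma essinf_on_bounded: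
  fixes f :: "real^'n::finite \<Rightarrow> real"
  assumes f: "f \<in> borel_measurable lebesgue" "\<And>x. f x \<ge> 0"
    and S: "S \<in> sets lebesgue" "S \<notin> null_sets lebesgue"
  shows "\<exists>N::nat. essinf_on S f \<le> ennreal (real N)"
proof -
  define E where "E k = {x \<in> S. f x \<le> real k}" for k :: nat
  have E: "E k \<in> sets lebesgue" for k
  proof -
    have "{x. f x \<le> real k} \<in> sets lebesgue"
      using f(1)[unfolded borel_measurable_iff_le] by simp
    moreover have "E k = S \<inter> {x. f x \<le> real k}" by (auto simp: E_def)
    ultimately show ?thesis using S(1) by auto
  qed
  have "(\<Union>k. E k) = S"
    by (auto simp: E_def) (meson real_arch_simple)
  then obtain k where k: "E k \<notin> null_sets lebesgue"
    using S(2) null_sets_UN[of E lebesgue] by (metis UNIV_I)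
  have "essinf_on S f \<le> ennreal (real k)"
  proof (rule essinf_on_le[OF f(2)])
    fix c :: real assume "c > 0" and ae: "AE x in lebesgue. x \<in> S \<longrightarrow> c \<le> f x"
    show "c \<le> real k"
    proof (rule ccontr)
      assume "\<not> c \<le> real k"
      hence "AE x in lebesgue. x \<notin> E k"
        using ae by (auto simp: E_def elim!: eventually_mono)
      hence "E k \<in> null_sets lebesgue" using E by (simp add: AE_iff_null_sets)
      thus False using k by simp
    qed
  qed simp
  thus ?thesis by blast
qed

lemma nn_integral_dyadic_finite:
  fixes \<sigma> :: real and h :: "real \<Rightarrow> ennreal"
  assumes \<sigma>: "\<sigma> > 1"
    and \<beta>: "\<And>k. \<beta> k \<ge> 0" "summable (\<lambda>k. \<beta> k * (\<sigma> ^ Suc k - \<sigma> ^ k))"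
    and h: "\<And>k \<rho>. \<sigma> ^ k \<le> \<rho> \<Longrightarrow> \<rho> < \<sigma> ^ Suc k \<Longrightarrow> h \<rho> \<le> ennreal (\<beta> k)"
  shows "(\<integral>\<^sup>+ \<rho>. indicator {1..} \<rho> * h \<rho> \<partial>lborel) < \<infinity>"
proof -
  define D where "D k = {\<sigma> ^ k..<\<sigma> ^ Suc k}" for k
  have dyadic: "\<exists>k. \<rho> \<in> D k" if \<rho>1: "\<rho> \<ge> 1" for \<rho>
  proof -
    obtain n where "\<rho> < \<sigma> ^ n" using real_arch_pow[OF \<sigma>] by blast
    hence ex: "\<exists>n. \<rho> < \<sigma> ^ n" ..
    define n0 where "n0 = (LEAST n. \<rho> < \<sigma> ^ n)"
    have n0: "\<rho> < \<sigma> ^ n0" unfolding n0_def by (rule LeastI_ex[OF ex])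
    then obtain k where k: "n0 = Suc k" using \<rho>1 by (cases n0) auto
    have "\<not> \<rho> < \<sigma> ^ k" using Least_le[of "\<lambda>n. \<rho> < \<sigma> ^ n" k] k by (auto simp: n0_def)
    thus ?thesis using n0 k by (auto simp: D_def not_less)
  qed
  have bound: "indicator {1..} \<rho> * h \<rho> \<le> (\<Sum>k. ennreal (\<beta> k) * indicator (D k) \<rho>)" for \<rho>
  proof (cases "\<rho> \<ge> 1")
    case True
    then obtain k where k: "\<rho> \<in> D k" using dyadic by blast
    hence "indicator {1..} \<rho> * h \<rho> \<le> ennreal (\<beta> k) * indicator (D k) \<rho>"
      using True h by (simp add: D_def)
    also have "\<dots> \<le> (\<Sum>j<Suc k. ennreal (\<beta> j) * indicator (D j) \<rho>)" by simp
    also have "\<dots> \<le> (\<Sum>j. ennreal (\<beta> j) * indicator (D j) \<rho>)"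
      by (rule sum_le_suminf) auto
    finally show ?thesis .
  qed simp
  have "(\<integral>\<^sup>+ \<rho>. (\<Sum>k. ennreal (\<beta> k) * indicator (D k) \<rho>) \<partial>lborel)
      = (\<Sum>k. \<integral>\<^sup>+ \<rho>. ennreal (\<beta> k) * indicator (D k) \<rho> \<partial>lborel)"
    by (rule nn_integral_suminf) (auto simp: D_def)
  also have "\<dots> = (\<Sum>k. ennreal (\<beta> k * (\<sigma> ^ Suc k - \<sigma> ^ k)))"
  proof (intro suminf_cong)
    fix k
    have "\<sigma> ^ k \<le> \<sigma> ^ Suc k" using \<sigma> by (intro power_increasing) auto
    thus "(\<integral>\<^sup>+ \<rho>. ennreal (\<beta> k) * indicator (D k) \<rho> \<partial>lborel) = ennreal (\<beta> k * (\<sigma> ^ Suc k - \<sigma> ^ k))"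
      using \<beta>(1)[of k] by (simp add: D_def nn_integral_cmult_indicator ennreal_mult[symmetric])
  qed
  also have "\<dots> < \<infinity>"
  proof -
    have "\<beta> k * (\<sigma> ^ Suc k - \<sigma> ^ k) \<ge> 0" for k
      using \<beta>(1)[of k] power_increasing[of k "Suc k" \<sigma>] \<sigma> by (intro mult_nonneg_nonneg) auto
    hence "(\<Sum>k. ennreal (\<beta> k * (\<sigma> ^ Suc k - \<sigma> ^ k))) \<noteq> top"
      by (rule ennreal_suminf_neq_top[OF \<beta>(2)])
    thus ?thesis by (simp add: top.not_eq_extremum)
  qed
  finally show ?thesis using nn_integral_mono[OF bound, of lborel] by (rule le_less_trans[rotated])
qed

lemma summable_eventually_telescoping:
  fixes g :: "nat \<Rightarrow> real"
  assumes x: "\<And>k. k \<ge> K0 \<Longrightarrow> x k = D * (g k - g (Suc k))"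
    and g: "\<And>k. k \<ge> K0 \<Longrightarrow> g (Suc k) \<le> g k" "\<And>k. g k \<ge> 0"
  shows "summable x"
proof -
  have "decseq (\<lambda>k. g (k + K0))" using g(1) by (intro decseq_SucI) simp
  then obtain L where "(\<lambda>k. g (k + K0)) \<longlonglongrightarrow> L"
    using decseq_convergent[of "\<lambda>k. g (k + K0)" 0] g(2) by metis
  hence "summable (\<lambda>k. D * (g (k + K0) - g (Suc k + K0)))"
    by (intro summable_mult telescope_summable') simp
  hence "summable (\<lambda>k. x (k + K0))" using x by simp
  thus ?thesis by (simp add: summable_iff_shift)
qed

lemma powr_minus_pred_mult_eq:
  fixes r g \<sigma> :: real
  assumes "r > 0"
  shows "r powr (g - 1) * r powr (- g) * (\<sigma> * r - r) = \<sigma> - 1"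
proof -
  have "r powr (g - 1) * r powr (- g) = r powr ((g - 1) + (- g))" by (simp only: powr_add)
  also have "\<dots> = inverse r" using assms by (simp add: powr_minus)
  finally show ?thesis using assms by (simp add: field_simps)
qed

lemma ball_subset_open_annulus:
  fixes s t :: real
  assumes "0 \<le> s" "s < t"
  obtains p :: "real^'n::finite" and e where "e > 0" "ball p e \<subseteq> {x. s < norm x \<and> norm x < t}"
proof -
  define p :: "real^'n" where "p = ((s + t) / 2) *\<^sub>R axis undefined 1"
  define e where "e = (t - s) / 2"
  have np: "norm p - e = s" "norm p + e = t" using assms by (simp_all add: p_def e_def field_simps)
  have "ball p e \<subseteq> {x. s < norm x \<and> norm x < t}"
  proof
    fix x assume "x \<in> ball p e"
    hence "norm (x - p) < e" by (simp add: dist_norm norm_minus_commute)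
    moreover have "norm p \<le> norm x + norm (x - p)" "norm x \<le> norm p + norm (x - p)"
      using norm_triangle_sub[of p x] norm_triangle_sub[of x p] by (simp_all add: norm_minus_commute)
    ultimately show "x \<in> {x. s < norm x \<and> norm x < t}" using np by auto
  qed
  moreover have "e > 0" using assms by (simp add: e_def)
  ultimately show ?thesis using that by blast
qed

lemma ball_not_null_sets:
  fixes p :: "real^'n::finite"
  assumes "e > 0"
  shows "ball p e \<notin> null_sets lebesgue"
proof
  assume "ball p e \<in> null_sets lebesgue"
  hence "emeasure lebesgue (ball p e) = 0" by auto
  hence "measure lebesgue (ball p e) = 0" by (simp add: measure_def)
  moreover have "measure lebesgue (ball p e) = unit_ball_vol (real DIM(real^'n)) * e ^ DIM(real^'n)"
    using content_ball[of e p] assms by (simp add: measure_completion)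
  ultimately show False using assms by simp
qed

lemma powr_le_max_powr:
  fixes r \<rho> \<sigma> g :: real
  assumes r: "r > 0" and "r \<le> \<rho>" "\<rho> \<le> \<sigma> * r" and \<sigma>: "\<sigma> > 1"
  shows "\<rho> powr g \<le> max 1 (\<sigma> powr g) * r powr g"
proof (cases "g \<ge> 0")
  case True
  have "\<rho> powr g \<le> (\<sigma> * r) powr g"
    using assms True by (intro powr_mono2) auto
  also have "\<dots> = \<sigma> powr g * r powr g" using r \<sigma> by (simp add: powr_mult)
  also have "\<dots> \<le> max 1 (\<sigma> powr g) * r powr g" by (intro mult_right_mono) auto
  finally show ?thesis .
next
  case False
  have "\<rho> powr g \<le> r powr g"
    using assms False by (intro powr_mono2') auto
  also have "\<dots> \<le> max 1 (\<sigma> powr g) * r powr g"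
    using mult_right_mono[of 1 "max 1 (\<sigma> powr g)" "r powr g"] by simp
  finally show ?thesis .
qed

section \<open>Weak solutions\<close>

lemma test_fun_continuous: "test_fun \<phi> \<Longrightarrow> continuous_on UNIV \<phi>"
  unfolding test_fun_def smooth_fun_def by (metis Dlist.simps(1))

lemma test_fun_measurable: "test_fun \<phi> \<Longrightarrow> \<phi> \<in> borel_measurable lebesgue"
  using continuous_imp_measurable_on_sets_lebesgue[of UNIV \<phi>, OF test_fun_continuous]
  by (simp add: lebesgue_on_UNIV_eq)

lemma closed_shell_scale:
  fixes x :: "real^'n::finite"
  assumes "r > 0"
  shows "(1/r) *\<^sub>R x \<in> closed_shell 1 R \<longleftrightarrow> x \<in> closed_shell r (R * r)"
  using assms by (simp add: closed_shell_def le_divide_eq_1 divide_le_eq)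

lemma
  fixes \<Phi> :: "real^'n::finite \<Rightarrow> real"
  assumes \<Phi>: "admissible_cutoff R lam m M \<Phi>" and r: "r > 0"
  shows test_fun_admissible_cutoff_scaled: "test_fun (\<lambda>x. \<Phi> ((1/r) *\<^sub>R x))"
    and admissible_cutoff_scaled_nonneg: "0 \<le> \<Phi> ((1/r) *\<^sub>R x)"
    and admissible_cutoff_scaled_le_1: "\<Phi> ((1/r) *\<^sub>R x) \<le> 1"
    and admissible_cutoff_scaled_eq_1: "norm x \<le> r \<Longrightarrow> \<Phi> ((1/r) *\<^sub>R x) = 1"
    and admissible_cutoff_scaled_eq_0: "R * r \<le> norm x \<Longrightarrow> \<Phi> ((1/r) *\<^sub>R x) = 0"
    and Dalpha_abs_sum_admissible_cutoff_scaled: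
      "Dalpha_abs_sum m (\<lambda>x. \<Phi> ((1/r) *\<^sub>R x)) x
         \<le> (1/r)^m * M * \<Phi> ((1/r) *\<^sub>R x) powr (1/lam) * indicator (closed_shell r (R * r)) x"
proof -
  note \<Phi>def = \<Phi>[unfolded admissible_cutoff_def]
  have nsc: "norm ((1/r) *\<^sub>R x) = norm x / r" using r by simp
  show "test_fun (\<lambda>x. \<Phi> ((1/r) *\<^sub>R x))" using test_fun_scale[of \<Phi> "1/r"] \<Phi>def r by simp
  show "0 \<le> \<Phi> ((1/r) *\<^sub>R x)" "\<Phi> ((1/r) *\<^sub>R x) \<le> 1" using \<Phi>def by auto
  show "norm x \<le> r \<Longrightarrow> \<Phi> ((1/r) *\<^sub>R x) = 1" using \<Phi>def r by (simp add: nsc)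
  show "R * r \<le> norm x \<Longrightarrow> \<Phi> ((1/r) *\<^sub>R x) = 0"
    using \<Phi>def r by (simp add: nsc pos_le_divide_eq)
  have "smooth_fun \<Phi>" using \<Phi>def by (simp add: test_fun_def)
  hence "Dalpha_abs_sum m (\<lambda>x. \<Phi> ((1/r) *\<^sub>R x)) x = (1/r)^m * Dalpha_abs_sum m \<Phi> ((1/r) *\<^sub>R x)"
    unfolding Dalpha_abs_sum_def sum_distrib_left
    by (intro sum.cong refl) (use r in \<open>auto simp: Dalpha_scale abs_mult\<close>)
  also have "\<dots> \<le> (1/r)^m * (M * \<Phi> ((1/r) *\<^sub>R x) powr (1/lam) * indicator (closed_shell 1 R) ((1/r) *\<^sub>R x))"
    using \<Phi>def r by (intro mult_left_mono) auto
  finally show "Dalpha_abs_sum m (\<lambda>x. \<Phi> ((1/r) *\<^sub>R x)) x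
      \<le> (1/r)^m * M * \<Phi> ((1/r) *\<^sub>R x) powr (1/lam) * indicator (closed_shell r (R * r)) x"
    using closed_shell_scale[OF r, of x R] by (simp add: indicator_def mult.assoc)
qed

lemma closed_shell_closed: "closed (closed_shell r R)"
  unfolding closed_shell_def by (intro closed_Collect_conj closed_Collect_le continuous_intros)

lemma closed_shell_sets_lebesgue: "closed_shell r R \<in> sets lebesgue"
  using closed_shell_closed by (metis borel_closed sets_completionI_sets sets_lborel)

lemma closed_shell_subset_cball: "closed_shell r R \<subseteq> cball 0 R"
  by (auto simp: closed_shell_def)

lemma emeasure_closed_shell_finite: "emeasure lebesgue (closed_shell r R :: (real^'n::finite) set) < \<infinity>"
proof -
  have c: "cball (0::real^'n) R \<in> fmeasurable lebesgue" by (rule lmeasurable_cball)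
  have "emeasure lebesgue (closed_shell r R :: (real^'n) set) \<le> emeasure lebesgue (cball (0::real^'n) R)"
    using c closed_shell_sets_lebesgue by (intro emeasure_mono closed_shell_subset_cball) (auto simp: fmeasurable_def)
  also have "\<dots> < \<infinity>" using c by (simp add: fmeasurable_def)
  finally show ?thesis .
qed

lemma measure_closed_shell_le:
  assumes "R \<ge> 0"
  shows "measure lebesgue (closed_shell r R :: (real^'n::finite) set) \<le> unit_ball_vol (real CARD('n)) * R ^ CARD('n)"
proof -
  have "measure lebesgue (closed_shell r R :: (real^'n) set) \<le> measure lebesgue (cball (0::real^'n) R)"
    by (intro measure_mono_fmeasurable closed_shell_subset_cball closed_shell_sets_lebesgue)
      (auto intro: lmeasurable_cball)
  also have "\<dots> = measure lborel (cball (0::real^'n) R)"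
    by (simp add: measure_completion)
  also have "\<dots> = unit_ball_vol (real CARD('n)) * R ^ CARD('n)"
    using content_cball[of R "0::real^'n"] assms by simp
  finally show ?thesis .
qed

locale weak_solution =
  fixes m :: nat and lam :: real and \<sigma> :: real
    and A :: "'n::finite multiset \<Rightarrow> real^'n \<Rightarrow> real \<Rightarrow> real"
    and a b u :: "real^'n \<Rightarrow> real"
  assumes m: "m \<ge> 1" and lam: "lam > 1"
    and b_measurable: "b \<in> borel_measurable lebesgue" and b_pos: "\<And>x. b x > 0"
    and a_measurable: "a \<in> borel_measurable lebesgue" and a_pos: "\<And>x. a x > 0"
    and A_bound: "AE x in lebesgue. \<forall>\<zeta> \<alpha>. size \<alpha> = m \<longrightarrow> \<bar>A \<alpha> x \<zeta>\<bar> \<le> a x * \<bar>\<zeta>\<bar>"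
    and \<sigma>: "\<sigma> > 1"
    and solution: "is_solution m lam A b u"
begin

definition dens :: "real^'n \<Rightarrow> real" where
  "dens x = b x * \<bar>u x\<bar> powr lam"

definition weight :: "real^'n \<Rightarrow> real" where
  "weight x = a x powr (- lam) * b x"

definition shell :: "real \<Rightarrow> (real^'n) set" where
  "shell r = closed_shell r (sqrt \<sigma> * r)"

definition ball_mass :: "real \<Rightarrow> real" where
  "ball_mass r = (\<integral>x. indicator (ball 0 r) x * dens x \<partial>lebesgue)"

definition shell_mass :: "real \<Rightarrow> real" where
  "shell_mass r = (\<integral>x. indicator (shell r) x * dens x \<partial>lebesgue)"

definition gam :: real where
  "gam = (real m - real CARD('n)) * lam + real CARD('n)"

lemma sqrt_sigma_less: "sqrt \<sigma> < \<sigma>"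
proof -
  have "sqrt \<sigma> * 1 < sqrt \<sigma> * sqrt \<sigma>" using \<sigma> by (intro mult_strict_left_mono) auto
  thus ?thesis using \<sigma> by simp
qed

lemma dens_nonneg: "dens x \<ge> 0"
  using b_pos[of x] by (simp add: dens_def)

lemma weight_nonneg: "weight x \<ge> 0"
  using b_pos[of x] by (simp add: weight_def)

lemma weight_measurable: "weight \<in> borel_measurable lebesgue"
  unfolding weight_def[abs_def] using a_measurable b_measurable
  by (intro borel_measurable_times powr_real_measurable) auto

lemma integrable_indicator_dens: "compact K \<Longrightarrow> integrable lebesgue (\<lambda>x. indicator K x *\<^sub>R dens x)"
  using solution by (simp add: is_solution_def loc_integrable_def set_integrable_def dens_def[abs_def])

lemma dens_measurable: "dens \<in> borel_measurable lebesgue"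
proof (rule borel_measurable_LIMSEQ_real)
  fix i :: nat
  show "(\<lambda>x. indicator (cball 0 (real i)) x *\<^sub>R dens x) \<in> borel_measurable lebesgue"
    using integrable_indicator_dens[of "cball 0 (real i)"] by (intro borel_measurable_integrable) auto
next
  fix x :: "real^'n"
  obtain N :: nat where N: "norm x \<le> real N" using real_arch_simple by blast
  have "\<forall>\<^sub>F i in sequentially. indicator (cball 0 (real i)) x *\<^sub>R dens x = dens x"
    unfolding eventually_sequentially
    by (intro exI[of _ N] allI impI) (use N in \<open>auto simp: indicator_def\<close>)
  thus "(\<lambda>i. indicator (cball 0 (real i)) x *\<^sub>R dens x) \<longlonglongrightarrow> dens x"
    by (rule tendsto_eventually)
qed

lemma integrable_dens_bounded:
  assumes g: "g \<in> borel_measurable lebesgue" "\<And>x. \<bar>g x\<bar> \<le> 1"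
    and S: "S \<in> sets lebesgue" "bounded S" "\<And>x. x \<notin> S \<Longrightarrow> g x = 0"
  shows "integrable lebesgue (\<lambda>x. dens x * g x)"
proof -
  obtain R where "\<forall>x\<in>S. norm x \<le> R" using S(2) unfolding bounded_iff by blast
  hence R: "S \<subseteq> cball 0 R" by auto
  have "integrable lebesgue (\<lambda>x. indicator S x *\<^sub>R (indicator (cball 0 R) x *\<^sub>R dens x))"
    by (intro integrable_mult_indicator S(1) integrable_indicator_dens compact_cball)
  moreover have "(\<lambda>x. indicator S x *\<^sub>R (indicator (cball 0 R) x *\<^sub>R dens x)) = (\<lambda>x. indicator S x * dens x)"
    using R by (intro ext) (auto simp: indicator_def)
  ultimately have int: "integrable lebesgue (\<lambda>x. indicator S x * dens x)" by simp
  show ?thesis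
  proof (rule Bochner_Integration.integrable_bound[OF int])
    show "(\<lambda>x. dens x * g x) \<in> borel_measurable lebesgue" using dens_measurable g(1) by measurable
    show "AE x in lebesgue. norm (dens x * g x) \<le> norm (indicator S x * dens x)"
      using g(2) S(3) dens_nonneg by (intro AE_I2) (auto simp: indicator_def abs_mult mult_left_le)
  qed
qed

lemma integrable_indicator_dens_bounded:
  "S \<in> sets lebesgue \<Longrightarrow> bounded S \<Longrightarrow> integrable lebesgue (\<lambda>x. indicator S x * dens x)"
  using integrable_dens_bounded[of "indicator S" S] by (simp add: mult.commute)

lemma integrable_ball_dens: "integrable lebesgue (\<lambda>x. indicator (ball 0 r) x * dens x)"
  by (intro integrable_indicator_dens_bounded) (auto intro: borel_open sets_completionI_sets)

lemma integrable_shell_dens: "integrable lebesgue (\<lambda>x. indicator (shell r) x * dens x)"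
  unfolding shell_def
  by (intro integrable_indicator_dens_bounded closed_shell_sets_lebesgue
      bounded_subset[OF bounded_cball closed_shell_subset_cball])

lemma ball_mass_nonneg: "ball_mass r \<ge> 0"
  unfolding ball_mass_def using dens_nonneg by (intro integral_nonneg_AE) auto

lemma shell_mass_nonneg: "shell_mass r \<ge> 0"
  unfolding shell_mass_def using dens_nonneg by (intro integral_nonneg_AE) auto

lemma ball_mass_mono: "r \<le> r' \<Longrightarrow> ball_mass r \<le> ball_mass r'"
  unfolding ball_mass_def using dens_nonneg
  by (intro integral_mono integrable_ball_dens) (auto simp: indicator_def)

lemma ball_mass_add_shell_mass_le: "r > 0 \<Longrightarrow> ball_mass r + shell_mass r \<le> ball_mass (\<sigma> * r)"
proof -
  assume r: "r > 0"
  have "sqrt \<sigma> * r < \<sigma> * r" "r < \<sigma> * r" using sqrt_sigma_less r \<sigma> by auto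
  hence le: "indicator (ball 0 r) x * dens x + indicator (shell r) x * dens x
      \<le> indicator (ball 0 (\<sigma> * r)) x * dens x" for x
    using dens_nonneg[of x] by (auto simp: indicator_def shell_def closed_shell_def)
  have "ball_mass r + shell_mass r
      = (\<integral>x. indicator (ball 0 r) x * dens x + indicator (shell r) x * dens x \<partial>lebesgue)"
    unfolding ball_mass_def shell_mass_def
    using Bochner_Integration.integral_add[OF integrable_ball_dens integrable_shell_dens] by simp
  also have "\<dots> \<le> ball_mass (\<sigma> * r)" unfolding ball_mass_def
    by (intro integral_mono Bochner_Integration.integrable_add integrable_ball_dens
        integrable_shell_dens le)
  finally show ?thesis .
qed

lemma ball_mass_eq_0_imp:
  assumes "\<And>r. r > 0 \<Longrightarrow> ball_mass r = 0"
  shows "AE x in lebesgue. u x = 0"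
proof -
  have "AE x in lebesgue. indicator (ball 0 (real (Suc n))) x * dens x = 0" for n :: nat
    using assms[of "real (Suc n)"] integral_nonneg_eq_0_iff_AE[OF integrable_ball_dens] dens_nonneg
    unfolding ball_mass_def by auto
  hence "AE x in lebesgue. \<forall>n::nat. indicator (ball 0 (real (Suc n))) x * dens x = 0"
    unfolding AE_all_countable by blast
  thus ?thesis
  proof (rule eventually_mono)
    fix x :: "real^'n"
    assume H: "\<forall>n::nat. indicator (ball 0 (real (Suc n))) x * dens x = 0"
    obtain n :: nat where "norm x \<le> real n" using real_arch_simple by blast
    hence "dens x = 0" using H[rule_format, of n] by simp
    thus "u x = 0" using b_pos[of x] by (simp add: dens_def)
  qed
qed

definition test_mass :: "(real^'n \<Rightarrow> real) \<Rightarrow> real \<Rightarrow> real" where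
  "test_mass \<Phi> r = (\<integral>x. dens x * \<Phi> ((1/r) *\<^sub>R x) \<partial>lebesgue)"

definition test_shell_mass :: "(real^'n \<Rightarrow> real) \<Rightarrow> real \<Rightarrow> real" where
  "test_shell_mass \<Phi> r = (\<integral>x. dens x * (\<Phi> ((1/r) *\<^sub>R x) * indicator (shell r) x) \<partial>lebesgue)"

lemma
  assumes \<Phi>: "admissible_cutoff (sqrt \<sigma>) lam m M \<Phi>" and r: "r > 0"
  shows integrable_test_mass: "integrable lebesgue (\<lambda>x. dens x * \<Phi> ((1/r) *\<^sub>R x))"
    and integrable_test_shell_mass:
      "integrable lebesgue (\<lambda>x. dens x * (\<Phi> ((1/r) *\<^sub>R x) * indicator (shell r) x))"
proof -
  note \<phi>01 = admissible_cutoff_scaled_nonneg[OF \<Phi> r] admissible_cutoff_scaled_le_1[OF \<Phi> r]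
  have \<phi>m: "(\<lambda>x. \<Phi> ((1/r) *\<^sub>R x)) \<in> borel_measurable lebesgue"
    by (rule test_fun_measurable[OF test_fun_admissible_cutoff_scaled[OF \<Phi> r]])
  show "integrable lebesgue (\<lambda>x. dens x * \<Phi> ((1/r) *\<^sub>R x))"
    using \<phi>m \<phi>01 admissible_cutoff_scaled_eq_0[OF \<Phi> r]
    by (intro integrable_dens_bounded[of _ "cball 0 (sqrt \<sigma> * r)"])
      (auto simp: mult.commute intro: borel_closed sets_completionI_sets)
  have "shell r \<in> sets lebesgue" unfolding shell_def by (rule closed_shell_sets_lebesgue)
  thus "integrable lebesgue (\<lambda>x. dens x * (\<Phi> ((1/r) *\<^sub>R x) * indicator (shell r) x))"
    using \<phi>m \<phi>01
    by (intro integrable_dens_bounded[of _ "shell r"])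
      (auto simp: shell_def indicator_def
        intro: bounded_subset[OF bounded_cball closed_shell_subset_cball])
qed

lemma
  assumes \<Phi>: "admissible_cutoff (sqrt \<sigma>) lam m M \<Phi>" and r: "r > 0"
  shows ball_mass_le_test_mass: "ball_mass r \<le> test_mass \<Phi> r"
    and test_shell_mass_le_test_mass: "test_shell_mass \<Phi> r \<le> test_mass \<Phi> r"
    and test_shell_mass_le_shell_mass: "test_shell_mass \<Phi> r \<le> shell_mass r"
    and test_shell_mass_nonneg: "0 \<le> test_shell_mass \<Phi> r"
proof -
  note \<phi>01 = admissible_cutoff_scaled_nonneg[OF \<Phi> r] admissible_cutoff_scaled_le_1[OF \<Phi> r]
  note int = integrable_test_mass[OF \<Phi> r] integrable_test_shell_mass[OF \<Phi> r]
  show "ball_mass r \<le> test_mass \<Phi> r"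
    unfolding ball_mass_def test_mass_def
    using admissible_cutoff_scaled_eq_1[OF \<Phi> r] \<phi>01 dens_nonneg
    by (intro integral_mono integrable_ball_dens int) (auto simp: indicator_def)
  show "test_shell_mass \<Phi> r \<le> test_mass \<Phi> r"
    unfolding test_shell_mass_def test_mass_def
    using \<phi>01 dens_nonneg by (intro integral_mono int) (auto simp: indicator_def)
  show "test_shell_mass \<Phi> r \<le> shell_mass r"
    unfolding test_shell_mass_def shell_mass_def
    using \<phi>01 dens_nonneg
    by (intro integral_mono int integrable_shell_dens) (auto simp: indicator_def mult_left_le)
  show "0 \<le> test_shell_mass \<Phi> r"
    unfolding test_shell_mass_def using \<phi>01 dens_nonneg by (intro integral_nonneg_AE AE_I2) auto
qed

lemma weak_form_integrand_le:
  fixes \<phi> :: "real^'n \<Rightarrow> real"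
  assumes Ax: "\<forall>\<zeta> \<alpha>. size \<alpha> = m \<longrightarrow> \<bar>A \<alpha> x \<zeta>\<bar> \<le> a x * \<bar>\<zeta>\<bar>"
    and wx: "x \<in> S \<Longrightarrow> c \<le> weight x"
    and D\<phi>: "Dalpha_abs_sum m \<phi> x \<le> K * \<phi> x powr (1/lam) * indicator S x"
    and \<phi>x: "0 \<le> \<phi> x" and K: "K \<ge> 0" and d: "d > 0" and c: "c > 0"
  shows "\<bar>\<Sum>\<alpha>\<in>{\<alpha>. size \<alpha> = m}. A \<alpha> x (u x) * Dalpha \<alpha> \<phi> x\<bar>
    \<le> d powr lam / lam * (dens x * (\<phi> x * indicator S x))
      + d powr (- (lam/(lam-1))) / (lam/(lam-1)) * K powr (lam/(lam-1)) * c powr (- 1/(lam-1))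
        * indicator S x"
proof -
  have "\<bar>\<Sum>\<alpha>\<in>{\<alpha>. size \<alpha> = m}. A \<alpha> x (u x) * Dalpha \<alpha> \<phi> x\<bar>
      \<le> (\<Sum>\<alpha>\<in>{\<alpha>. size \<alpha> = m}. \<bar>A \<alpha> x (u x) * Dalpha \<alpha> \<phi> x\<bar>)"
    by (rule sum_abs)
  also have "\<dots> \<le> (\<Sum>\<alpha>\<in>{\<alpha>. size \<alpha> = m}. a x * \<bar>u x\<bar> * \<bar>Dalpha \<alpha> \<phi> x\<bar>)"
    using Ax by (intro sum_mono) (auto simp: abs_mult intro!: mult_right_mono)
  also have "\<dots> = a x * \<bar>u x\<bar> * Dalpha_abs_sum m \<phi> x"
    by (simp add: Dalpha_abs_sum_def sum_distrib_left)
  also have "\<dots> \<le> a x * \<bar>u x\<bar> * (K * \<phi> x powr (1/lam) * indicator S x)"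
    using D\<phi> a_pos[of x] by (intro mult_left_mono) auto
  finally have le: "\<bar>\<Sum>\<alpha>\<in>{\<alpha>. size \<alpha> = m}. A \<alpha> x (u x) * Dalpha \<alpha> \<phi> x\<bar>
      \<le> a x * \<bar>u x\<bar> * (K * \<phi> x powr (1/lam) * indicator S x)" .
  show ?thesis
  proof (cases "x \<in> S")
    case True
    have "a x * \<bar>u x\<bar> * K * \<phi> x powr (1/lam) \<le>
       d powr lam / lam * (b x * \<bar>u x\<bar> powr lam) * \<phi> x
       + d powr (- (lam/(lam-1))) / (lam/(lam-1)) * K powr (lam/(lam-1)) * c powr (- 1/(lam-1))"
      using wx True by (intro young_absorb lam a_pos b_pos K d c \<phi>x) (auto simp: weight_def)
    thus ?thesis using True le by (simp add: dens_def algebra_simps)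
  next
    case False
    thus ?thesis using le d K c lam by simp
  qed
qed

lemma test_mass_le_young:
  assumes \<Phi>: "admissible_cutoff (sqrt \<sigma>) lam m M \<Phi>" and M: "M > 0"
    and r: "r > 0" and c: "c > 0" and d: "d > 0"
    and c_weight: "AE x in lebesgue. x \<in> shell r \<longrightarrow> c \<le> weight x"
  shows "test_mass \<Phi> r \<le> d powr lam / lam * test_shell_mass \<Phi> r
    + d powr (- (lam/(lam-1))) / (lam/(lam-1)) *
      (((1/r)^m * M) powr (lam/(lam-1)) * c powr (-1/(lam-1)) *
       (unit_ball_vol (real CARD('n)) * (sqrt \<sigma> * r)^CARD('n)))"
proof -
  define \<phi> where "\<phi> x = \<Phi> ((1/r) *\<^sub>R x)" for x
  define K where "K = (1/r)^m * M"
  have K: "K \<ge> 0" using r M by (simp add: K_def)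
  define D2 where "D2 = d powr (- (lam/(lam-1))) / (lam/(lam-1)) * K powr (lam/(lam-1)) * c powr (- 1/(lam-1))"
  have D2: "D2 \<ge> 0" using lam unfolding D2_def by (intro mult_nonneg_nonneg divide_nonneg_pos) auto
  define T where "T x = d powr lam / lam * (dens x * (\<phi> x * indicator (shell r) x))
    + D2 * indicator (shell r) x" for x
  define Sm where "Sm x = (\<Sum>\<alpha>\<in>{\<alpha>. size \<alpha> = m}. A \<alpha> x (u x) * Dalpha \<alpha> \<phi> x)" for x
  have integrable_shell: "integrable lebesgue (indicator (shell r) :: real^'n \<Rightarrow> real)"
    unfolding shell_def
    by (rule integrable_real_indicator[OF closed_shell_sets_lebesgue emeasure_closed_shell_finite])
  have \<phi>t: "test_fun \<phi>" unfolding \<phi>_def[abs_def] by (rule test_fun_admissible_cutoff_scaled[OF \<Phi> r])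
  note \<phi>01 = admissible_cutoff_scaled_nonneg[OF \<Phi> r] admissible_cutoff_scaled_le_1[OF \<Phi> r]
  have "test_mass \<Phi> r \<le> integral\<^sup>L lebesgue Sm"
    using solution \<phi>t \<phi>01 unfolding is_solution_def Sm_def test_mass_def
    by (auto simp: \<phi>_def dens_def)
  also have "\<dots> \<le> integral\<^sup>L lebesgue T"
  proof (rule integral_mono_AE')
    show "integrable lebesgue T"
      unfolding T_def \<phi>_def using integrable_test_shell_mass[OF \<Phi> r] integrable_shell
      by (intro Bochner_Integration.integrable_add integrable_mult_right) auto
    show "AE x in lebesgue. Sm x \<le> T x"
      using A_bound c_weight
    proof eventually_elim
      case (elim x)
      have "Dalpha_abs_sum m \<phi> x \<le> K * \<phi> x powr (1/lam) * indicator (shell r) x"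
        using Dalpha_abs_sum_admissible_cutoff_scaled[OF \<Phi> r, of x]
        unfolding \<phi>_def[symmetric] \<phi>_def[abs_def, symmetric] K_def shell_def
        by (simp add: mult.commute)
      hence "\<bar>Sm x\<bar> \<le> T x"
        unfolding Sm_def T_def D2_def
        by (rule weak_form_integrand_le[OF elim(1), rotated])
          (use elim(2) \<phi>01 K d c in \<open>auto simp: \<phi>_def\<close>)
      thus ?case by simp
    qed
    show "AE x in lebesgue. 0 \<le> T x"
      using dens_nonneg \<phi>01 D2 lam by (intro AE_I2) (auto simp: T_def \<phi>_def)
  qed
  also have "integral\<^sup>L lebesgue T = d powr lam / lam * test_shell_mass \<Phi> r
      + D2 * measure lebesgue (shell r)"
    unfolding T_def test_shell_mass_def \<phi>_def
    using integrable_test_shell_mass[OF \<Phi> r] integrable_shell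
    by (subst Bochner_Integration.integral_add) auto
  also have "\<dots> \<le> d powr lam / lam * test_shell_mass \<Phi> r
      + D2 * (unit_ball_vol (real CARD('n)) * (sqrt \<sigma> * r)^CARD('n))"
    using measure_closed_shell_le[of "sqrt \<sigma> * r" r] D2 r \<sigma>
    by (auto simp: shell_def intro!: mult_left_mono)
  finally show ?thesis by (simp add: D2_def K_def algebra_simps)
qed

lemma mass_estimates:
  obtains C1 C2 where "C1 > 0" "C2 > 0"
    and "\<And>r c. r > 0 \<Longrightarrow> c > 0 \<Longrightarrow> (AE x in lebesgue. x \<in> shell r \<longrightarrow> c \<le> weight x) \<Longrightarrow>
      ball_mass r \<le> C2 * (c * r powr gam) powr (-1/(lam-1))"
    and "\<And>r c. r > 0 \<Longrightarrow> c > 0 \<Longrightarrow> (AE x in lebesgue. x \<in> shell r \<longrightarrow> c \<le> weight x) \<Longrightarrow>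
      ball_mass r powr lam * (c * r powr gam) \<le> C1 * shell_mass r"
proof -
  have "sqrt \<sigma> > 1" using \<sigma> by simp
  then obtain \<Phi> :: "real^'n \<Rightarrow> real" and M where M: "M > 0"
    and \<Phi>: "admissible_cutoff (sqrt \<sigma>) lam m M \<Phi>"
    using admissible_cutoff_exists[OF _ lam m] by blast
  define q where "q = lam / (lam - 1)"
  have q: "q > 0" using lam by (simp add: q_def)
  define Z0 where "Z0 = M powr q * unit_ball_vol (real CARD('n)) * sqrt \<sigma> ^ CARD('n)"
  have Z0: "Z0 > 0" using M \<sigma> by (simp add: Z0_def)
  define d0 where "d0 = (lam / 2) powr (1/lam)"
  have d0: "d0 > 0" "d0 powr lam / lam = 1/2" using lam by (simp_all add: d0_def powr_powr)
  define C1 where "C1 = Z0 powr (lam - 1)"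
  define C2 where "C2 = 2 * (d0 powr (-q) / q * Z0)"
  have estimates: "ball_mass r \<le> C2 * P powr (-1/(lam-1)) \<and> ball_mass r powr lam * P \<le> C1 * shell_mass r"
    if r: "r > 0" and c: "c > 0" and cw: "AE x in lebesgue. x \<in> shell r \<longrightarrow> c \<le> weight x"
      and P: "P = c * r powr gam" for r c P
  proof -
    define I where "I = test_mass \<Phi> r"
    define J where "J = test_shell_mass \<Phi> r"
    have P0: "P > 0" using P c r by simp
    define Z where "Z = Z0 * P powr (-1/(lam-1))"
    have Z: "Z > 0" using Z0 P0 by (simp add: Z_def)
    have Zeq: "((1/r)^m * M) powr (lam/(lam-1)) * c powr (-1/(lam-1)) *
        (unit_ball_vol (real CARD('n)) * (sqrt \<sigma> * r)^CARD('n)) = Z"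
      unfolding Z_def Z0_def P gam_def q_def
      by (rule scaled_remainder_eq) (use r c M \<sigma> lam in auto)
    have young: "I \<le> d powr lam / lam * J + d powr (- (lam/(lam-1))) / (lam/(lam-1)) * Z"
      if "d > 0" for d
      using test_mass_le_young[OF \<Phi> M r c that cw] unfolding Zeq I_def J_def .
    have FI: "ball_mass r \<le> I" and JI: "J \<le> I" and JW: "J \<le> shell_mass r" and J0: "0 \<le> J"
      unfolding I_def J_def
      using ball_mass_le_test_mass[OF \<Phi> r] test_shell_mass_le_test_mass[OF \<Phi> r]
        test_shell_mass_le_shell_mass[OF \<Phi> r] test_shell_mass_nonneg[OF \<Phi> r] by auto
    have "I \<le> 1/2 * J + d0 powr (-q) / q * Z" using young[OF d0(1)] d0(2) by (simp add: q_def)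
    hence E2: "ball_mass r \<le> C2 * P powr (-1/(lam-1))"
      using FI JI by (simp add: C2_def Z_def mult.assoc)
    have "I powr lam \<le> J * Z powr (lam - 1)"
      using FI ball_mass_nonneg[of r] by (intro powr_le_of_young_bounds[OF lam _ J0 Z young]) auto
    also have "Z powr (lam - 1) = C1 / P"
    proof -
      have "(P powr (-1/(lam-1))) powr (lam - 1) = P powr (-1)"
        using lam P0 by (simp add: powr_powr)
      thus ?thesis using Z0 P0 by (simp add: Z_def C1_def powr_mult powr_minus divide_inverse)
    qed
    finally have "I powr lam * P \<le> J * C1" using P0 by (simp add: field_simps)
    moreover have "ball_mass r powr lam \<le> I powr lam"
      using FI ball_mass_nonneg[of r] lam by (intro powr_mono2) auto
    ultimately have "ball_mass r powr lam * P \<le> shell_mass r * C1"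
      using JW P0 Z0 by (smt (verit) C1_def mult_right_mono powr_gt_zero)
    thus ?thesis using E2 by (simp add: mult.commute)
  qed
  show ?thesis
    by (rule that[of C1 C2]) (use Z0 q d0 estimates in \<open>auto simp: C1_def C2_def\<close>)
qed

definition ess_weight :: "real \<Rightarrow> ennreal" where
  "ess_weight \<rho> = essinf_on (ball 0 (\<sigma> * \<rho>) - ball 0 (\<rho> / \<sigma>)) weight"

lemma annulus_subset:
  assumes "s \<le> \<rho>" "\<rho> \<le> \<sigma> * s"
  shows "{x. s \<le> norm x \<and> norm x < \<sigma> * s} \<subseteq> ball 0 (\<sigma> * \<rho>) - ball 0 (\<rho> / \<sigma>)"
proof -
  have "\<rho> / \<sigma> \<le> s" "\<sigma> * s \<le> \<sigma> * \<rho>" using assms \<sigma> by (simp_all add: divide_le_eq mult.commute)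
  thus ?thesis by auto
qed

lemma shell_subset_annulus:
  assumes r: "r > 0" and \<rho>: "r \<le> \<rho>" "\<rho> \<le> \<sigma> * r"
  shows "shell r \<subseteq> ball 0 (\<sigma> * \<rho>) - ball 0 (\<rho> / \<sigma>)"
proof -
  have "sqrt \<sigma> * r < \<sigma> * r" using sqrt_sigma_less r by simp
  hence "shell r \<subseteq> {x. r \<le> norm x \<and> norm x < \<sigma> * r}"
    by (auto simp: shell_def closed_shell_def)
  thus ?thesis using annulus_subset[OF \<rho>] by blast
qed

lemma ess_weight_bounded:
  assumes s: "s > 0"
  obtains N where "\<And>\<rho>. s \<le> \<rho> \<Longrightarrow> \<rho> \<le> \<sigma> * s \<Longrightarrow> ess_weight \<rho> \<le> ennreal N"
proof -
  have "0 \<le> s" "s < \<sigma> * s" using s \<sigma> by auto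
  then obtain p :: "real^'n" and e where e: "e > 0" and B: "ball p e \<subseteq> {x. s < norm x \<and> norm x < \<sigma> * s}"
    by (rule ball_subset_open_annulus)
  obtain N :: nat where N: "essinf_on (ball p e) weight \<le> ennreal (real N)"
    using essinf_on_bounded[OF weight_measurable weight_nonneg _ ball_not_null_sets[OF e]]
    by (auto intro: borel_open sets_completionI_sets)
  have "ess_weight \<rho> \<le> ennreal (real N)" if "s \<le> \<rho>" "\<rho> \<le> \<sigma> * s" for \<rho>
  proof -
    have "ball p e \<subseteq> ball 0 (\<sigma> * \<rho>) - ball 0 (\<rho> / \<sigma>)"
      using B annulus_subset[OF that] by (blast intro: less_imp_le)
    thus ?thesis using N essinf_on_antimono unfolding ess_weight_def by (blast intro: order_trans)
  qed
  thus ?thesis using that by blast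
qed

lemma ess_weight_le_mass_decrement:
  obtains Cm where "Cm > 0"
    and "\<And>r \<rho>. r > 0 \<Longrightarrow> ball_mass r > 0 \<Longrightarrow> r \<le> \<rho> \<Longrightarrow> \<rho> \<le> \<sigma> * r \<Longrightarrow>
      ess_weight \<rho> \<le> ennreal (Cm * r powr (- gam)
        * (ball_mass r powr (1 - lam) - ball_mass (\<sigma> * r) powr (1 - lam)))"
proof -
  obtain C1 C2 where C: "C1 > 0" "C2 > 0"
    and E2: "\<And>r c. r > 0 \<Longrightarrow> c > 0 \<Longrightarrow> (AE x in lebesgue. x \<in> shell r \<longrightarrow> c \<le> weight x) \<Longrightarrow>
      ball_mass r \<le> C2 * (c * r powr gam) powr (-1/(lam-1))"
    and E1: "\<And>r c. r > 0 \<Longrightarrow> c > 0 \<Longrightarrow> (AE x in lebesgue. x \<in> shell r \<longrightarrow> c \<le> weight x) \<Longrightarrow>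
      ball_mass r powr lam * (c * r powr gam) \<le> C1 * shell_mass r"
    using mass_estimates by blast
  define Cm where "Cm = max (C2 powr (lam - 1)) C1
    * max (1 / (1 - 2 powr (1 - lam))) (2 powr lam / (lam - 1))"
  have "max (1 / (1 - 2 powr (1 - lam))) (2 powr lam / (lam - 1)) > 0"
    using lam by (simp add: less_max_iff_disj)
  moreover have "max (C2 powr (lam - 1)) C1 > 0" using C by (simp add: less_max_iff_disj)
  ultimately have Cm: "Cm > 0" unfolding Cm_def by simp
  have "ess_weight \<rho> \<le> ennreal (Cm * r powr (- gam)
        * (ball_mass r powr (1 - lam) - ball_mass (\<sigma> * r) powr (1 - lam)))"
    if r: "r > 0" and F: "ball_mass r > 0" and \<rho>: "r \<le> \<rho>" "\<rho> \<le> \<sigma> * r" for r \<rho>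
    unfolding ess_weight_def
  proof (rule essinf_on_le[OF weight_nonneg])
    have "ball_mass r \<le> ball_mass (\<sigma> * r)" using r \<sigma> by (intro ball_mass_mono) simp
    hence "ball_mass (\<sigma> * r) powr (1 - lam) \<le> ball_mass r powr (1 - lam)"
      using F lam by (intro powr_mono2') auto
    thus "0 \<le> Cm * r powr (- gam) * (ball_mass r powr (1 - lam) - ball_mass (\<sigma> * r) powr (1 - lam))"
      using Cm by simp
    fix c assume c: "c > 0"
      and "AE x in lebesgue. x \<in> ball 0 (\<sigma> * \<rho>) - ball 0 (\<rho> / \<sigma>) \<longrightarrow> c \<le> weight x"
    hence cw: "AE x in lebesgue. x \<in> shell r \<longrightarrow> c \<le> weight x"
      using shell_subset_annulus[OF r \<rho>] by (auto elim!: eventually_mono)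
    have "c * r powr gam \<le> Cm * (ball_mass r powr (1 - lam) - ball_mass (\<sigma> * r) powr (1 - lam))"
      unfolding Cm_def
      using le_of_mass_estimates[OF lam F shell_mass_nonneg ball_mass_add_shell_mass_le[OF r] _ C
          E2[OF r c cw] E1[OF r c cw]] c r by simp
    hence "c * r powr gam * r powr (- gam)
        \<le> Cm * (ball_mass r powr (1 - lam) - ball_mass (\<sigma> * r) powr (1 - lam)) * r powr (- gam)"
      by (intro mult_right_mono) auto
    thus "c \<le> Cm * r powr (- gam) * (ball_mass r powr (1 - lam) - ball_mass (\<sigma> * r) powr (1 - lam))"
      using r by (simp add: powr_minus field_simps)
  qed
  thus ?thesis using that Cm by blast
qed

lemma ess_weight_integral_finite:
  assumes r0: "r0 > 0" and F0: "ball_mass r0 > 0"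
  shows "(\<integral>\<^sup>+ \<rho>. indicator {1..} \<rho> * ennreal (\<rho> powr (gam - 1)) * ess_weight \<rho> \<partial>lborel) < \<infinity>"
proof -
  obtain Cm where Cm: "Cm > 0" and decrement: "\<And>r \<rho>. r > 0 \<Longrightarrow> ball_mass r > 0 \<Longrightarrow> r \<le> \<rho> \<Longrightarrow>
      \<rho> \<le> \<sigma> * r \<Longrightarrow> ess_weight \<rho> \<le> ennreal (Cm * r powr (- gam)
        * (ball_mass r powr (1 - lam) - ball_mass (\<sigma> * r) powr (1 - lam)))"
    using ess_weight_le_mass_decrement by blast
  obtain K0 where K0: "r0 < \<sigma> ^ K0" using real_arch_pow[OF \<sigma>] by blast
  have \<sigma>_pow: "\<sigma> ^ k > 0" for k using \<sigma> by simp
  have F_pos: "ball_mass (\<sigma> ^ k) > 0" if "k \<ge> K0" for k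
    using F0 ball_mass_mono[of r0 "\<sigma> ^ k"] K0 power_increasing[OF that, of \<sigma>] \<sigma> by linarith
  define g where "g k = ball_mass (\<sigma> ^ k) powr (1 - lam)" for k
  have g_dec: "g (Suc k) \<le> g k" if "k \<ge> K0" for k
    unfolding g_def using F_pos[OF that] lam \<sigma>
    by (intro powr_mono2' ball_mass_mono) auto
  have "\<exists>N. \<forall>\<rho>. \<sigma> ^ k \<le> \<rho> \<and> \<rho> \<le> \<sigma> * \<sigma> ^ k \<longrightarrow> ess_weight \<rho> \<le> ennreal N" for k
    by (rule ess_weight_bounded[OF \<sigma>_pow[of k]]) blast
  then obtain N where N: "\<And>k \<rho>. \<sigma> ^ k \<le> \<rho> \<Longrightarrow> \<rho> \<le> \<sigma> * \<sigma> ^ k \<Longrightarrow> ess_weight \<rho> \<le> ennreal (N k)"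
    using choice[OF allI] by (metis (no_types, lifting))
  define Cg where "Cg = max 1 (\<sigma> powr (gam - 1))"
  have Cg: "Cg > 0" by (simp add: Cg_def less_max_iff_disj)
  \<comment> \<open>Below \<open>\<sigma> ^ K0\<close> the ball mass may vanish, so there only the crude bound \<open>N\<close> is used.\<close>
  define B where "B k = (if k < K0 then max 0 (N k) else Cm * (\<sigma> ^ k) powr (- gam) * (g k - g (Suc k)))"
    for k
  define \<beta> where "\<beta> k = Cg * (\<sigma> ^ k) powr (gam - 1) * B k" for k
  have B_nonneg: "B k \<ge> 0" for k
    using Cm g_dec[of k] by (simp add: B_def)
  hence \<beta>_nonneg: "\<beta> k \<ge> 0" for k
    using Cg by (simp add: \<beta>_def)
  have "ennreal (\<rho> powr (gam - 1)) * ess_weight \<rho> \<le> ennreal (\<beta> k)"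
    if \<rho>: "\<sigma> ^ k \<le> \<rho>" "\<rho> < \<sigma> ^ Suc k" for k \<rho>
  proof -
    have \<rho>': "\<sigma> ^ k \<le> \<rho>" "\<rho> \<le> \<sigma> * \<sigma> ^ k" using \<rho> by auto
    have "ess_weight \<rho> \<le> ennreal (B k)"
      using N[OF \<rho>'] decrement[OF \<sigma>_pow F_pos \<rho>']
      by (cases "k < K0") (auto simp: B_def g_def ennreal_leI intro: order_trans)
    moreover have "ennreal (\<rho> powr (gam - 1)) \<le> ennreal (Cg * (\<sigma> ^ k) powr (gam - 1))"
      using powr_le_max_powr[OF \<sigma>_pow \<rho>' \<sigma>] by (simp add: Cg_def ennreal_leI)
    ultimately have "ennreal (\<rho> powr (gam - 1)) * ess_weight \<rho>
        \<le> ennreal (Cg * (\<sigma> ^ k) powr (gam - 1)) * ennreal (B k)"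
      by (intro mult_mono) auto
    thus ?thesis using Cg B_nonneg[of k] by (simp add: \<beta>_def ennreal_mult)
  qed
  moreover have "summable (\<lambda>k. \<beta> k * (\<sigma> ^ Suc k - \<sigma> ^ k))"
  proof (rule summable_eventually_telescoping)
    fix k assume "k \<ge> K0"
    hence "\<beta> k * (\<sigma> ^ Suc k - \<sigma> ^ k) = Cg * Cm * (g k - g (Suc k))
        * ((\<sigma> ^ k) powr (gam - 1) * (\<sigma> ^ k) powr (- gam) * (\<sigma> * \<sigma> ^ k - \<sigma> ^ k))"
      by (simp add: \<beta>_def B_def mult_ac)
    also have "\<dots> = Cg * Cm * (g k - g (Suc k)) * (\<sigma> - 1)"
      by (simp only: powr_minus_pred_mult_eq[OF \<sigma>_pow])
    finally show "\<beta> k * (\<sigma> ^ Suc k - \<sigma> ^ k) = Cg * Cm * (\<sigma> - 1) * (g k - g (Suc k))"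
      by (simp add: mult_ac)
  qed (use g_dec in \<open>auto simp: g_def\<close>)
  ultimately show ?thesis
    using nn_integral_dyadic_finite[OF \<sigma> \<beta>_nonneg] by (simp add: mult.assoc)
qed

end

theorem theorem2p1:
  fixes m :: nat and lam :: real and \<sigma> :: real
    and A :: "'n::finite multiset \<Rightarrow> real^'n \<Rightarrow> real \<Rightarrow> real"
    and a b u :: "real^'n \<Rightarrow> real"
  assumes "m \<ge> 1" and "lam > 1"
    and "b \<in> borel_measurable lebesgue" and "\<And>x. b x > 0"
    and "a \<in> borel_measurable lebesgue" and "\<And>x. a x > 0"
    and "AE x in lebesgue. \<forall>\<zeta> \<alpha>. size \<alpha> = m \<longrightarrow> \<bar>A \<alpha> x \<zeta>\<bar> \<le> a x * \<bar>\<zeta>\<bar>"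
    and "\<sigma> > 1"
    and "(\<integral>\<^sup>+ r. indicator {1..} r * ennreal (r powr ((real m - real CARD('n)) * lam + real CARD('n) - 1))
            * essinf_on (ball 0 (\<sigma> * r) - ball 0 (r / \<sigma>)) (\<lambda>x. a x powr (- lam) * b x) \<partial>lborel) = \<infinity>"
    and "is_solution m lam A b u"
  shows "AE x in lebesgue. u x = 0"
proof -
  interpret weak_solution m lam \<sigma> A a b u
    using assms(1-8,10) by unfold_locales auto
  have "(\<integral>\<^sup>+ r. indicator {1..} r * ennreal (r powr (gam - 1)) * ess_weight r \<partial>lborel) = \<infinity>"
    using assms(9) by (simp add: gam_def ess_weight_def weight_def[abs_def])
  hence "ball_mass r = 0" if "r > 0" for r
    using ess_weight_integral_finite[OF that] ball_mass_nonneg[of r] by force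
  thus ?thesis by (rule ball_mass_eq_0_imp)
qed

end
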